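(* Assume the setting below, and suppose the reduced solution $u_0$ is a linear function. On the Shishkin mesh $S_N$ (i.e. $\lambda=N$) with mesh parameter $a\ge a_*:=\beta/(b(0)-\beta)$, let $U^N$ be the solution of the discrete problem $U^N_0=0$, $L^NU^N_i=f(x_i)$ for $1\le i\le N-1$, $U^N_N=0$. Then \[ \|u^N-U^N\|\le C\max\left\{\varepsilon N^{-2}(\ln N)^2,\ N^{-a}\right\}, \] with $C$ independent of $\varepsilon$ and $N$.
   Context: Let $0<\varepsilon<1$. Let $b,c,f\in C^4[0,1]$, and let $\beta$ be a constant with $b(x)>\beta>0$ and $c(x)\ge0$ on $[0,1]$. Let $u$ be the solution of $-\varepsilon u''-bu'+cu=f$ on $(0,1)$ with $u(0)=u(1)=0$. The reduced solution $u_0$ is the solution of $-bu_0'+cu_0=f$ on $(0,1)$ with $u_0(1)=0$. Mesh $S_\lambda$, $\lambda\in\{N,\varepsilon^{-1}\}$. $N$ is a positive integer. $Q\in(0,1)$ is a fixed rational with $J=QN$ an integer, and $a>0$. Set $\xi=(a\varepsilon/\beta)\ln\lambda$, assumed $\le Q$, and $h=\xi/J$, $H=(1-\xi)/(N-J)$. The mesh points are $x_i=ih$ ($0\le i\le J$) and $x_i=\xi+(i-J)H$ ($J\le i\le N$). Write $h_i=x_i-x_{i-1}$ and $\hbar_i=(h_i+h_{i+1})/2$. Scheme. $D^+U_i=(U_{i+1}-U_i)/h_{i+1}$, $D^-U_i=(U_i-U_{i-1})/h_i$, $D''U_i=(D^+U_i-D^-U_i)/\hbar_i$. Let $\sigma(\rho)=2\rho/(e^{2\rho}-1)$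 for $\rho>0$, $\sigma(0)=1$, and $\rho_i=b(x_i)h_{i+1}/(2\varepsilon)$. The ASI operator is $L^NU_i=-\varepsilon\sigma(\rho_i)D''U_i-b(x_i)D^+U_i+c(x_i)U_i$. $u^N$ is the restriction of $u$ to the mesh, and $\|U\|=\max_i|U_i|$. *)

theory Defs
  imports "HOL-Analysis.Analysis"
begin

definition Ck_on :: "nat \<Rightarrow> real set \<Rightarrow> (real \<Rightarrow> real) \<Rightarrow> bool" where
  "Ck_on k S g \<longleftrightarrow> (\<exists>D. (\<forall>x\<in>S. D 0 x = g x) \<and>
      (\<forall>j<k. \<forall>x\<in>S. (D j has_real_derivative D (Suc j) x) (at x within S)) \<and>
      (\<forall>j\<le>k. continuous_on S (D j)))"

definition bvp_solution ::
  "real \<Rightarrow> (real \<Rightarrow> real) \<Rightarrow> (real \<Rightarrow> real) \<Rightarrow> (real \<Rightarrow> real) \<Rightarrow> (real \<Rightarrow> real) \<Rightarrow> bool" where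
  "bvp_solution eps b c f u \<longleftrightarrow> continuous_on {0..1} u \<and> u 0 = 0 \<and> u 1 = 0 \<and>
     (\<exists>u' u''. \<forall>x\<in>{0<..<1}. (u has_real_derivative u' x) (at x) \<and>
        (u' has_real_derivative u'' x) (at x) \<and>
        - eps * u'' x - b x * u' x + c x * u x = f x)"

definition reduced_solution ::
  "(real \<Rightarrow> real) \<Rightarrow> (real \<Rightarrow> real) \<Rightarrow> (real \<Rightarrow> real) \<Rightarrow> (real \<Rightarrow> real) \<Rightarrow> bool" where
  "reduced_solution b c f u0 \<longleftrightarrow> continuous_on {0..1} u0 \<and> u0 1 = 0 \<and>
     (\<exists>u0'. \<forall>x\<in>{0<..<1}. (u0 has_real_derivative u0' x) (at x) \<and>
        - b x * u0' x + c x * u0 x = f x)"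

definition trans_pt :: "real \<Rightarrow> real \<Rightarrow> real \<Rightarrow> real \<Rightarrow> real" where
  "trans_pt a eps beta lam = a * eps / beta * ln lam"

definition shishkin_mesh :: "real \<Rightarrow> real \<Rightarrow> real \<Rightarrow> real \<Rightarrow> real \<Rightarrow> nat \<Rightarrow> nat \<Rightarrow> real" where
  "shishkin_mesh lam a eps beta Q N i =
     (let xi = trans_pt a eps beta lam; J = Q * real N;
          h = xi / J; H = (1 - xi) / (real N - J)
      in if real i \<le> J then real i * h else xi + (real i - J) * H)"

definition step :: "(nat \<Rightarrow> real) \<Rightarrow> nat \<Rightarrow> real" where
  "step x i = x i - x (i - 1)"

definition Dplus :: "(nat \<Rightarrow> real) \<Rightarrow> (nat \<Rightarrow> real) \<Rightarrow> nat \<Rightarrow> real" where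
  "Dplus x U i = (U (i + 1) - U i) / step x (i + 1)"

definition Dminus :: "(nat \<Rightarrow> real) \<Rightarrow> (nat \<Rightarrow> real) \<Rightarrow> nat \<Rightarrow> real" where
  "Dminus x U i = (U i - U (i - 1)) / step x i"

definition D2 :: "(nat \<Rightarrow> real) \<Rightarrow> (nat \<Rightarrow> real) \<Rightarrow> nat \<Rightarrow> real" where
  "D2 x U i = (Dplus x U i - Dminus x U i) / ((step x i + step x (i + 1)) / 2)"

definition sigma :: "real \<Rightarrow> real" where
  "sigma \<rho> = (if \<rho> = 0 then 1 else 2 * \<rho> / (exp (2 * \<rho>) - 1))"

definition LN :: "real \<Rightarrow> (real \<Rightarrow> real) \<Rightarrow> (real \<Rightarrow> real) \<Rightarrow> (nat \<Rightarrow> real) \<Rightarrow> (nat \<Rightarrow> real) \<Rightarrow> nat \<Rightarrow> real" where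
  "LN eps b c x U i =
     (let \<rho> = b (x i) * step x (i + 1) / (2 * eps)
      in - eps * sigma \<rho> * D2 x U i - b (x i) * Dplus x U i + c (x i) * U i)"

end

theory Submission
  imports Defs
begin

(*
  The reduced solution is u0 = p x - p, and the scheme reproduces it exactly, so the error
  is v - V, where v = u - u0 solves the homogeneous equation with v 0 = p, v 1 = 0, and V is
  its discrete counterpart.  The barrier exp (- beta x / eps) is a supersolution both for the
  differential operator and, on the whole Shishkin mesh, for the scheme; hence v and V are
  bounded by |p| exp (- beta x / eps), which is at most |p| N^(-a) beyond the transition point.
  On the fine part the mesh is uniform with k = h / eps = O (ln N / N).  Freezing b at a node,
  the fitted scheme is exact on constants and on the layer exponential, so its truncation
  error is O (k^2) times the local size of v, which decays like (1 + beta k / 2)^(-i).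
  Comparison with that geometric barrier bounds the error by O (eps k^2), which is
  O (eps N^(-2) (ln N)^2).
*)

section \<open>Calculus and exponential inequalities\<close>

lemma abs_diff_le_of_deriv_bound:
  fixes f f' :: "real \<Rightarrow> real"
  assumes cont: "continuous_on {lo..hi} f"
    and der: "\<And>x. lo < x \<Longrightarrow> x < hi \<Longrightarrow> (f has_real_derivative f' x) (at x)"
    and bd: "\<And>x. lo < x \<Longrightarrow> x < hi \<Longrightarrow> \<bar>f' x\<bar> \<le> K"
    and s: "s \<in> {lo..hi}" and t: "t \<in> {lo..hi}"
  shows "\<bar>f t - f s\<bar> \<le> K * \<bar>t - s\<bar>"
proof -
  have ordered: "\<bar>f r - f l\<bar> \<le> K * (r - l)" if lr: "l < r" and l: "l \<in> {lo..hi}" and r: "r \<in> {lo..hi}"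
    for l r
  proof -
    have der': "(f has_real_derivative f' z) (at z)" if "l < z" "z < r" for z
      using der that l r by auto
    have "continuous_on {l..r} f" using continuous_on_subset[OF cont] l r by auto
    moreover have "\<And>z. l < z \<Longrightarrow> z < r \<Longrightarrow> f differentiable (at z)"
      using der' real_differentiable_def by blast
    ultimately obtain z d where z: "l < z" "z < r" "DERIV f z :> d" "f r - f l = (r - l) * d"
      using MVT[OF lr] by blast
    have "d = f' z" using DERIV_unique[OF z(3) der'[OF z(1,2)]] .
    moreover have "\<bar>f' z\<bar> \<le> K" using bd z l r by auto
    ultimately show ?thesis using z lr by (simp add: abs_mult mult.commute mult_right_mono)
  qed
  show ?thesis
  proof (cases "s \<le> t")
    case True
    then show ?thesis using ordered[OF _ s t] by (cases "s = t") auto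
  next
    case False
    then show ?thesis using ordered[OF _ t s] by (simp add: abs_minus_commute)
  qed
qed

lemma abs_diff_le_of_deriv_bound_segment:
  fixes f f' :: "real \<Rightarrow> real"
  assumes der: "\<And>x. min s t \<le> x \<Longrightarrow> x \<le> max s t \<Longrightarrow> (f has_real_derivative f' x) (at x)"
    and bd: "\<And>x. min s t \<le> x \<Longrightarrow> x \<le> max s t \<Longrightarrow> \<bar>f' x\<bar> \<le> K"
  shows "\<bar>f t - f s\<bar> \<le> K * \<bar>t - s\<bar>"
  using field_differentiable_bound[of "{min s t..max s t}" f f' K t s] der bd
  by (auto intro: has_field_derivative_at_within)

lemma abs_mult_le: "\<bar>x\<bar> \<le> (A::real) \<Longrightarrow> \<bar>y\<bar> \<le> B \<Longrightarrow> \<bar>x * y\<bar> \<le> A * B"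
  unfolding abs_mult by (rule mult_mono) auto

lemma exp_taylor2_quotient_mono:
  fixes x y :: real
  assumes "0 < x" "x \<le> y"
  shows "(exp x - 1 - x) / x\<^sup>2 \<le> (exp y - 1 - y) / y\<^sup>2"
proof (rule DERIV_nonneg_imp_nondecreasing[OF assms(2)])
  have numerator_nonneg: "0 \<le> (t - 2) * exp t + t + 2" if "0 \<le> t" for t :: real
  proof -
    have "0 \<le> (s - 1) * exp s + 1" if "0 \<le> s" for s :: real
      using DERIV_nonneg_imp_nondecreasing[OF that, of "\<lambda>s. (s - 1) * exp s + 1"]
      by (force intro!: derivative_eq_intros simp: algebra_simps)
    then show ?thesis
      using DERIV_nonneg_imp_nondecreasing[OF that, of "\<lambda>t. (t - 2) * exp t + t + 2"]
      by (force intro!: derivative_eq_intros simp: algebra_simps)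
  qed
  fix z assume "x \<le> z" "z \<le> y"
  then have "z > 0" using assms by simp
  then have "((\<lambda>t. (exp t - 1 - t) / t\<^sup>2) has_real_derivative ((z - 2) * exp z + z + 2) / z ^ 3) (at z)"
    by (auto intro!: derivative_eq_intros simp: power2_eq_square power3_eq_cube field_simps)
       (auto simp: algebra_simps)?
  moreover have "((z - 2) * exp z + z + 2) / z ^ 3 \<ge> 0" using numerator_nonneg[of z] \<open>z > 0\<close> by simp
  ultimately show "\<exists>d. ((\<lambda>t. (exp t - 1 - t) / t\<^sup>2) has_real_derivative d) (at z) \<and> 0 \<le> d" by blast
qed

lemma two_mult_le_exp_minus_exp_neg:
  fixes y :: real
  assumes "0 \<le> y"
  shows "2 * y \<le> exp y - exp (- y)"
proof -
  have cosh_ge: "2 \<le> exp t + exp (- t)" for t :: real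
  proof -
    have "0 \<le> (exp (t/2) - exp (-t/2))\<^sup>2" by simp
    also have "\<dots> = exp t + exp (- t) - 2"
      by (simp add: power2_eq_square algebra_simps flip: exp_add)
    finally show ?thesis by simp
  qed
  show ?thesis
    using DERIV_nonneg_imp_nondecreasing[OF assms, of "\<lambda>t. exp t - exp (- t) - 2 * t"] cosh_ge
    by (force intro!: derivative_eq_intros)
qed

lemma exp_transition_inequality:
  fixes y z :: real
  assumes "0 < z" "z \<le> y"
  shows "2 * y\<^sup>2 * ((exp z - 1) / z - (1 - exp (- y)) / y) \<le> (1 - exp (- y)) * (exp y - 1) * (z + y)"
proof -
  have y: "0 < y" using assms by simp
  have "(exp z - 1) / z = 1 + z * ((exp z - 1 - z) / z\<^sup>2)"
    using assms by (simp add: field_simps power2_eq_square)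
  also have "\<dots> \<le> 1 + z * ((exp y - 1 - y) / y\<^sup>2)"
    using exp_taylor2_quotient_mono[OF assms] assms by (intro add_left_mono mult_left_mono) auto
  finally have "2 * y\<^sup>2 * ((exp z - 1) / z - (1 - exp (- y)) / y)
      \<le> 2 * y\<^sup>2 * (1 + z * ((exp y - 1 - y) / y\<^sup>2) - (1 - exp (- y)) / y)"
    by (intro mult_left_mono) auto
  also have "\<dots> = 2 * y\<^sup>2 + 2 * z * (exp y - 1 - y) - 2 * y * (1 - exp (- y))"
    using y by (simp add: field_simps power2_eq_square)
  also have "\<dots> \<le> (1 - exp (- y)) * (exp y - 1) * (z + y)"
  proof -
    have "0 \<le> (y - z) * (exp y - exp (- y) - 2 * y)"
      using two_mult_le_exp_minus_exp_neg[of y] assms by (intro mult_nonneg_nonneg) auto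
    then show ?thesis by (simp add: algebra_simps power2_eq_square flip: exp_add)
  qed
  finally show ?thesis .
qed

lemma exp_barrier_bracket_le:
  fixes y z Y :: real
  assumes zy: "0 < z" "z \<le> y" and Y: "exp y \<le> Y"
  shows "2 * y * ((exp z - 1) / z - (1 - exp (- y)) / y) / ((Y - 1) * (z + y)) \<le> (1 - exp (- y)) / y"
proof -
  define d where "d = (exp z - 1) / z - (1 - exp (- y)) / y"
  have exp_y: "exp y > 1" using zy by simp
  then have Y1: "Y > 1" using Y by linarith
  have "2 * y * d / ((Y - 1) * (z + y)) \<le> (1 - exp (- y)) / y"
  proof (cases "d \<le> 0")
    case True
    then have "2 * y * d / ((Y - 1) * (z + y)) \<le> 0"
      using zy Y1 by (intro divide_nonpos_pos mult_nonneg_nonpos mult_pos_pos) auto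
    also have "0 \<le> (1 - exp (- y)) / y" using zy by simp
    finally show ?thesis .
  next
    case False
    have "2 * y * d / ((Y - 1) * (z + y)) \<le> 2 * y * d / ((exp y - 1) * (z + y))"
      using False zy exp_y Y Y1 by (intro divide_left_mono mult_right_mono mult_pos_pos) auto
    also have "\<dots> \<le> (1 - exp (- y)) / y"
      using exp_transition_inequality[OF zy] zy exp_y
      by (simp add: d_def divide_simps power2_eq_square mult_ac)
    finally show ?thesis .
  qed
  then show ?thesis unfolding d_def .
qed

lemma sigma_pos: "\<rho> > 0 \<Longrightarrow> sigma \<rho> > 0"
  unfolding sigma_def by (auto intro!: divide_pos_pos simp: one_less_exp_iff)

lemma sigma_le_1: "\<rho> > 0 \<Longrightarrow> sigma \<rho> \<le> 1"
proof -
  assume "\<rho> > 0"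
  moreover have "2 * \<rho> \<le> exp (2 * \<rho>) - 1" using exp_ge_add_one_self[of "2 * \<rho>"] by linarith
  ultimately show ?thesis unfolding sigma_def by (simp add: divide_simps one_less_exp_iff)
qed

lemma eps_mult_sigma:
  assumes "eps > 0" "\<beta> > 0" "s > 0"
  shows "eps * sigma (\<beta> * s / (2 * eps)) = \<beta> * s / (exp (\<beta> * s / eps) - 1)"
  unfolding sigma_def using assms by (simp add: field_simps)

lemma abs_sigma_add_sub_1_le:
  assumes "\<rho> > 0"
  shows "\<bar>sigma \<rho> + \<rho> - 1\<bar> \<le> 2 * \<rho>\<^sup>2 * exp (2 * \<rho>)"
proof -
  define t where "t = 2 * \<rho>"
  have t: "t > 0" using assms t_def by simp
  define n where "n s = (s/2) * (exp s + 1) - exp s + 1" for s :: real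
  define n1 where "n1 s = (1 - exp s + s * exp s) / 2" for s :: real
  have dn: "(n has_real_derivative n1 s) (at s)" for s
    unfolding n_def n1_def by (auto intro!: derivative_eq_intros simp: field_simps)
  have dn1: "(n1 has_real_derivative s * exp s / 2) (at s)" for s
    unfolding n1_def by (auto intro!: derivative_eq_intros simp: field_simps)
  have cont: "continuous_on {0..t} g" if "\<And>s. (g has_real_derivative g' s) (at s)" for g g'
    using that by (intro continuous_at_imp_continuous_on) (auto intro: DERIV_continuous)
  have n1_bound: "\<bar>n1 s\<bar> \<le> t * exp t / 2 * t" if "s \<in> {0..t}" for s
  proof -
    have "\<bar>n1 s - n1 0\<bar> \<le> t * exp t / 2 * \<bar>s - 0\<bar>"
      by (rule abs_diff_le_of_deriv_bound[OF cont[OF dn1] dn1 _ _ that])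
         (use t in \<open>auto intro!: divide_right_mono mult_mono\<close>)
    also have "\<dots> \<le> t * exp t / 2 * t" using that t by (intro mult_left_mono) auto
    finally show ?thesis by (simp add: n1_def)
  qed
  have "\<bar>n t - n 0\<bar> \<le> t * exp t / 2 * t * \<bar>t - 0\<bar>"
    by (rule abs_diff_le_of_deriv_bound[OF cont[OF dn] dn]) (use t n1_bound in auto)
  then have n_bound: "\<bar>n t\<bar> \<le> t^3 * exp t / 2" using t by (simp add: n_def power3_eq_cube mult_ac)
  have et: "t \<le> exp t - 1" using exp_ge_add_one_self[of t] by linarith
  have "sigma \<rho> + \<rho> - 1 = n t / (exp t - 1)"
    using t assms unfolding sigma_def n_def t_def by (auto simp: field_simps)
  then have "\<bar>sigma \<rho> + \<rho> - 1\<bar> = \<bar>n t\<bar> / (exp t - 1)" using t et by simp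
  also have "\<dots> \<le> (t^3 * exp t / 2) / t" using t et n_bound by (intro frac_le) auto
  also have "\<dots> = 2 * \<rho>\<^sup>2 * exp (2 * \<rho>)" using t by (simp add: t_def power2_eq_square power3_eq_cube)
  finally show ?thesis .
qed

section \<open>The discrete operator\<close>

lemma Dplus_affine: "Dplus x (\<lambda>j. \<alpha> * F j + G j) i = \<alpha> * Dplus x F i + Dplus x G i"
  unfolding Dplus_def by (simp add: algebra_simps add_divide_distrib diff_divide_distrib)

lemma Dminus_affine: "Dminus x (\<lambda>j. \<alpha> * F j + G j) i = \<alpha> * Dminus x F i + Dminus x G i"
  unfolding Dminus_def by (simp add: algebra_simps add_divide_distrib diff_divide_distrib)

lemma D2_affine: "D2 x (\<lambda>j. \<alpha> * F j + G j) i = \<alpha> * D2 x F i + D2 x G i"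
  unfolding D2_def Dplus_affine Dminus_affine by (simp add: algebra_simps add_divide_distrib diff_divide_distrib)

lemma LN_affine: "LN eps b c x (\<lambda>j. \<alpha> * F j + G j) i = \<alpha> * LN eps b c x F i + LN eps b c x G i"
  unfolding LN_def Let_def D2_affine Dplus_affine by (simp add: algebra_simps)

lemma LN_diff: "LN eps b c x (\<lambda>j. F j - G j) i = LN eps b c x F i - LN eps b c x G i"
  using LN_affine[of eps b c x "-1" G F i] by (simp add: algebra_simps)

lemma LN_const: "LN eps b c x (\<lambda>j. K) i = c (x i) * K"
  unfolding LN_def D2_def Dplus_def Dminus_def Let_def by simp

lemma LN_eq:
  "LN eps b c x \<Phi> i =
     - eps * sigma (b (x i) * step x (i+1) / (2 * eps)) *
       (((\<Phi> (i+1) - \<Phi> i) / step x (i+1) - (\<Phi> i - \<Phi> (i-1)) / step x i) / ((step x i + step x (i+1)) / 2))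
     - b (x i) * ((\<Phi> (i+1) - \<Phi> i) / step x (i+1)) + c (x i) * \<Phi> i"
  unfolding LN_def Let_def D2_def Dplus_def Dminus_def by simp

lemma LN_affine_function:
  assumes "step x i \<noteq> 0" "step x (i+1) \<noteq> 0"
  shows "LN eps b c x (\<lambda>j. p * x j + q) i = - b (x i) * p + c (x i) * (p * x i + q)"
proof -
  have "Dplus x (\<lambda>j. p * x j + q) i = p" "Dminus x (\<lambda>j. p * x j + q) i = p"
    unfolding Dplus_def Dminus_def using assms by (simp_all add: step_def field_simps)
  then show ?thesis unfolding LN_def Let_def D2_def by simp
qed

lemma LN_neg_at_strict_min:
  assumes eps: "eps > 0" and steps: "step x i > 0" "step x (i+1) > 0"
    and bc: "b (x i) > 0" "c (x i) \<ge> 0"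
    and up: "\<Phi> (i+1) > \<Phi> i" and down: "\<Phi> (i-1) \<ge> \<Phi> i" and neg: "\<Phi> i < 0"
  shows "LN eps b c x \<Phi> i < 0"
proof -
  have "sigma (b (x i) * step x (i + 1) / (2 * eps)) > 0" using bc steps eps by (intro sigma_pos) simp
  moreover have "Dplus x \<Phi> i > 0" unfolding Dplus_def using up steps by simp
  moreover have "Dminus x \<Phi> i \<le> 0" unfolding Dminus_def using down steps by (simp add: divide_nonpos_pos)
  ultimately have "eps * sigma (b (x i) * step x (i + 1) / (2 * eps)) * D2 x \<Phi> i > 0"
    and "b (x i) * Dplus x \<Phi> i > 0"
    unfolding D2_def using eps steps bc by (auto intro!: divide_pos_pos)
  moreover have "c (x i) * \<Phi> i \<le> 0" using bc neg by (simp add: mult_nonneg_nonpos)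
  ultimately show ?thesis unfolding LN_def Let_def by simp
qed

text \<open>At the rightmost point where \<open>\<Phi>\<close> attains a negative minimum, \<open>LN \<Phi>\<close> would be negative.\<close>
lemma LN_minimum_principle:
  fixes x \<Phi> :: "nat \<Rightarrow> real"
  assumes lr: "l < r" and boundary: "\<Phi> l \<ge> 0" "\<Phi> r \<ge> 0" and eps: "eps > 0"
    and steps: "\<And>i. l < i \<Longrightarrow> i \<le> r \<Longrightarrow> step x i > 0"
    and bc: "\<And>i. l < i \<Longrightarrow> i < r \<Longrightarrow> b (x i) > 0 \<and> c (x i) \<ge> 0"
    and L: "\<And>i. l < i \<Longrightarrow> i < r \<Longrightarrow> LN eps b c x \<Phi> i \<ge> 0"
    and j: "j \<in> {l..r}"
  shows "\<Phi> j \<ge> 0"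
proof (rule ccontr)
  assume "\<not> \<Phi> j \<ge> 0"
  define m where "m = Min (\<Phi> ` {l..r})"
  have m_le: "m \<le> \<Phi> k" if "k \<in> {l..r}" for k unfolding m_def using that by simp
  have "m \<in> \<Phi> ` {l..r}" unfolding m_def using lr by (intro Min_in) auto
  have m_neg: "m < 0" using m_le[OF j] \<open>\<not> \<Phi> j \<ge> 0\<close> by simp
  define S where "S = {k \<in> {l..r}. \<Phi> k = m}"
  define i where "i = Max S"
  have "finite S" "S \<noteq> {}" using \<open>m \<in> \<Phi> ` {l..r}\<close> unfolding S_def by auto
  then have "i \<in> S" and i_max: "\<And>k. k \<in> S \<Longrightarrow> k \<le> i" unfolding i_def by auto
  then have "l \<le> i" "i \<le> r" and \<Phi>_i: "\<Phi> i = m" unfolding S_def by auto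
  moreover have "i \<noteq> l" "i \<noteq> r" using boundary m_neg \<Phi>_i by auto
  ultimately have i: "l < i" "i < r" by auto
  have "i + 1 \<notin> S" using i_max[of "i+1"] by auto
  then have "\<Phi> (i+1) \<noteq> m" using i unfolding S_def by auto
  have "i + 1 \<in> {l..r}" "i - 1 \<in> {l..r}" using i by auto
  then have "m \<le> \<Phi> (i+1)" "m \<le> \<Phi> (i-1)" using m_le by blast+
  with \<open>\<Phi> (i+1) \<noteq> m\<close> \<Phi>_i have "\<Phi> (i+1) > \<Phi> i" "\<Phi> (i-1) \<ge> \<Phi> i" by auto
  then have "LN eps b c x \<Phi> i < 0"
    using LN_neg_at_strict_min[OF eps steps[of i] steps[of "i+1"]] bc[of i] i m_neg \<Phi>_i by auto
  then show False using L[OF i(1,2)] by simp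
qed

lemma exp_barrier_LN_identity:
  fixes \<kappa> z y W Y B C :: real
  assumes \<kappa>: "\<kappa> > 0" and "z > 0" "y > 0"
  shows "- (B * (y / \<kappa>) / (Y - 1))
        * (((W * exp (- y) - W) / (y / \<kappa>) - (W - W * exp z) / (z / \<kappa>)) / ((z / \<kappa> + y / \<kappa>) / 2))
      - B * ((W * exp (- y) - W) / (y / \<kappa>)) + C * W
    = W * (B * \<kappa> * ((1 - exp (- y)) / y - 2 * y * ((exp z - 1) / z - (1 - exp (- y)) / y) / ((Y - 1) * (z + y))))
      + C * W"
proof -
  define d where "d = (exp z - 1) / z - (1 - exp (- y)) / y"
  define E where "E = (1 - exp (- y)) / y"
  define F where "F = 2 * y * d / ((Y - 1) * (z + y))"
  have difference: "(W * exp (- y) - W) / (y / \<kappa>) - (W - W * exp z) / (z / \<kappa>) = W * \<kappa> * d"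
    unfolding d_def using assms by (simp add: field_simps)
  have quotient: "W * \<kappa> * d / ((z / \<kappa> + y / \<kappa>) / 2) = W * \<kappa>\<^sup>2 * (2 * d / (z + y))"
    using assms by (simp add: field_simps power2_eq_square)
  have forward: "(W * exp (- y) - W) / (y / \<kappa>) = - W * \<kappa> * E"
    unfolding E_def using assms by (simp add: field_simps)
  have diffusion: "- (B * (y / \<kappa>) / (Y - 1)) * (W * \<kappa>\<^sup>2 * (2 * d / (z + y))) = - (W * (B * \<kappa> * F))"
    unfolding F_def using \<kappa> by (simp add: power2_eq_square)
  show ?thesis
    unfolding difference unfolding quotient forward unfolding diffusion unfolding d_def[symmetric]
    unfolding E_def[symmetric] F_def[symmetric]
    by (simp add: ring_distribs mult_ac)
qed

lemma LN_exp_barrier_nonneg: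
  assumes eps: "eps > 0" and beta: "beta > 0" and bc: "b (x i) \<ge> beta" "c (x i) \<ge> 0"
    and steps: "0 < step x i" "step x i \<le> step x (i+1)"
  shows "LN eps b c x (\<lambda>j. exp (- beta * x j / eps)) i \<ge> 0"
proof -
  define \<kappa> where "\<kappa> = beta / eps"
  define W where "W = exp (- beta * x i / eps)"
  define z where "z = \<kappa> * step x i"
  define y where "y = \<kappa> * step x (i+1)"
  define Y where "Y = exp (b (x i) * step x (i+1) / eps)"
  have \<kappa>: "\<kappa> > 0" unfolding \<kappa>_def using beta eps by simp
  have zy: "0 < z" "z \<le> y" unfolding z_def y_def using steps \<kappa> by auto
  have Y: "exp y \<le> Y"
    unfolding Y_def y_def \<kappa>_def using bc zy steps eps by (auto intro!: divide_right_mono mult_right_mono)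
  have exp_y: "exp y > 1" using zy by simp
  have b_pos: "b (x i) > 0" using bc beta by simp
  define d where "d = (exp z - 1) / z - (1 - exp (- y)) / y"
  have bracket: "2 * y * d / ((Y - 1) * (z + y)) \<le> (1 - exp (- y)) / y"
    unfolding d_def by (rule exp_barrier_bracket_le[OF zy Y])
  have "LN eps b c x (\<lambda>j. exp (- beta * x j / eps)) i
      = - (b (x i) * step x (i+1) / (Y - 1))
          * (((W * exp (- y) - W) / step x (i+1) - (W - W * exp z) / step x i) / ((step x i + step x (i+1)) / 2))
        - b (x i) * ((W * exp (- y) - W) / step x (i+1)) + c (x i) * W"
  proof -
    have "exp (- beta * x (i+1) / eps) = W * exp (- y)" "exp (- beta * x (i-1) / eps) = W * exp z"
      unfolding W_def y_def z_def step_def \<kappa>_def using eps by (simp_all add: field_simps flip: exp_add)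
    moreover have "eps * sigma (b (x i) * step x (i+1) / (2 * eps)) = b (x i) * step x (i+1) / (Y - 1)"
      unfolding Y_def using eps b_pos steps by (intro eps_mult_sigma) auto
    ultimately show ?thesis unfolding LN_eq W_def[symmetric] by (simp add: mult.assoc)
  qed
  also have "\<dots> = W * (b (x i) * \<kappa> * ((1 - exp (- y)) / y - 2 * y * d / ((Y - 1) * (z + y)))) + c (x i) * W"
  proof -
    have "step x i = z / \<kappa>" "step x (i+1) = y / \<kappa>" unfolding z_def y_def using \<kappa> by auto
    then show ?thesis unfolding d_def by (simp only:) (rule exp_barrier_LN_identity[OF \<kappa>], use zy in auto)
  qed
  also have "\<dots> \<ge> 0"
    using bracket b_pos bc \<kappa> zy exp_y unfolding W_def
    by (intro add_nonneg_nonneg mult_nonneg_nonneg) auto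
  finally show ?thesis .
qed

lemma LN_geometric_barrier_ge:
  assumes eps: "eps > 0" and beta: "beta > 0" and bc: "b (x i) \<ge> beta" "c (x i) \<ge> 0"
    and h: "h > 0" and steps: "step x i = h" "step x (i+1) = h" and i: "1 \<le> i"
    and r: "r = 1 + (beta / 2) * (h / eps)"
  shows "LN eps b c x (\<lambda>j. inverse r ^ j) i \<ge> beta\<^sup>2 / (4 * eps) * inverse r ^ (i+1)"
proof -
  define g where "g = beta / 2"
  define S where "S = sigma (b (x i) * h / (2 * eps))"
  define P where "P = inverse r ^ (i+1)"
  have r1: "r > 1" unfolding r using beta h eps by simp
  have P: "P > 0" unfolding P_def using r1 by simp
  have powers: "inverse r ^ i = P * r" "inverse r ^ (i-1) = P * r * r"
    using i r1 unfolding P_def by (cases i; simp add: field_simps)+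
  have "LN eps b c x (\<lambda>j. inverse r ^ j) i =
      - eps * S * (((P - P * r) / h - (P * r - P * r * r) / h) / ((h + h) / 2))
      - b (x i) * ((P - P * r) / h) + c (x i) * (P * r)"
    unfolding LN_eq steps S_def powers by (simp add: P_def)
  also have "\<dots> = P * (g / eps) * (b (x i) - S * g) + c (x i) * (P * r)"
    using h eps unfolding r g_def by (simp add: field_simps power2_eq_square)
  also have "\<dots> \<ge> P * (g / eps) * (beta - g)"
  proof -
    have "S \<le> 1" unfolding S_def using bc beta h eps by (intro sigma_le_1) auto
    then have "S * g \<le> 1 * g" using beta unfolding g_def by (intro mult_right_mono) auto
    then have "beta - g \<le> b (x i) - S * g" using bc by simp
    then have "P * (g / eps) * (beta - g) \<le> P * (g / eps) * (b (x i) - S * g)"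
      using P beta eps unfolding g_def by (intro mult_left_mono) auto
    moreover have "0 \<le> c (x i) * (P * r)" using bc P r1 by simp
    ultimately show ?thesis by linarith
  qed
  finally show ?thesis unfolding g_def P_def by (simp add: power2_eq_square field_simps)
qed

text \<open>The fitted operator \<open>epsS D'' + bi D+\<close> on a uniform stencil, applied to the values at
  \<open>s0 + h\<close>, \<open>s0\<close>, \<open>s0 - h\<close>; at such a node with \<open>b\<close> frozen, \<open>LN\<close> is \<open>- stencil + c\<close>.\<close>
definition stencil :: "real \<Rightarrow> real \<Rightarrow> real \<Rightarrow> real \<Rightarrow> real \<Rightarrow> real \<Rightarrow> real" where
  "stencil epsS bi h ap a0 am = epsS * (ap - 2 * a0 + am) / h\<^sup>2 + bi * (ap - a0) / h"

lemma stencil_affine: "stencil epsS bi h (ap + c * bp) (a0 + c * b0) (am + c * bm) = stencil epsS bi h ap a0 am + c * stencil epsS bi h bp b0 bm"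
  unfolding stencil_def by (simp add: algebra_simps add_divide_distrib diff_divide_distrib)

lemma stencil_const: "stencil epsS bi h c c c = 0" unfolding stencil_def by simp

lemma stencil_zero_mid: "stencil epsS bi h Yp 0 Ym = epsS * (Yp + Ym) / h\<^sup>2 + bi * Yp / h"
  unfolding stencil_def by simp

lemma abs_stencil_zero_mid_le:
  assumes "epsS > 0" "bi > 0" "h > 0"
  shows "\<bar>stencil epsS bi h Yp 0 Ym\<bar> \<le> epsS * (\<bar>Yp\<bar> + \<bar>Ym\<bar>) / h\<^sup>2 + bi * \<bar>Yp\<bar> / h"
proof -
  have "\<bar>epsS * (Yp + Ym) / h\<^sup>2\<bar> = epsS * \<bar>Yp + Ym\<bar> / h\<^sup>2" using assms by (simp add: abs_mult)
  also have "\<dots> \<le> epsS * (\<bar>Yp\<bar> + \<bar>Ym\<bar>) / h\<^sup>2"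
    using assms by (intro divide_right_mono mult_left_mono abs_triangle_ineq) auto
  finally have "\<bar>epsS * (Yp + Ym) / h\<^sup>2\<bar> \<le> epsS * (\<bar>Yp\<bar> + \<bar>Ym\<bar>) / h\<^sup>2" .
  moreover have "\<bar>bi * Yp / h\<bar> = bi * \<bar>Yp\<bar> / h" using assms by (simp add: abs_mult)
  ultimately show ?thesis
    unfolding stencil_zero_mid using abs_triangle_ineq[of "epsS * (Yp + Ym) / h\<^sup>2" "bi * Yp / h"] by linarith
qed

lemma stencil_eq: "h > 0 \<Longrightarrow> epsS * (((ap - a0) / h - (a0 - am) / h) / ((h + h) / 2)) + bi * ((ap - a0) / h)
   = stencil epsS bi h ap a0 am"
  unfolding stencil_def by (simp add: field_simps power2_eq_square)

context
  fixes eps h bi X epsS :: real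
  assumes eps: "eps > 0" and h: "h > 0" and bi: "bi > 0" and X: "X > 1"
    and epsS_eq: "epsS = bi * h / (X - 1)"
begin

lemma stencil_exp_exact: "stencil epsS bi h (1 / X) 1 X = 0"
proof -
  have X0: "X - 1 \<noteq> 0" "X \<noteq> 0" using X by auto
  show ?thesis unfolding stencil_def epsS_eq using h X0 by (simp add: field_simps power2_eq_square)
qed

lemma stencil_z1: "stencil epsS bi h (h / bi - eps / bi\<^sup>2 + eps / bi\<^sup>2 * (1 / X)) 0 (- h / bi - eps / bi\<^sup>2 + eps / bi\<^sup>2 * X) = 1"
proof -
  have X0: "X - 1 \<noteq> 0" "X \<noteq> 0" using X by auto
  show ?thesis unfolding stencil_def epsS_eq using h bi X0 by (simp add: field_simps power2_eq_square)
qed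

lemma stencil_z2: "stencil epsS bi h (h\<^sup>2 / (2 * bi) - eps * h / bi\<^sup>2 + eps\<^sup>2 / bi ^ 3 * (1 - 1 / X)) 0
     (h\<^sup>2 / (2 * bi) + eps * h / bi\<^sup>2 + eps\<^sup>2 / bi ^ 3 * (1 - X)) = epsS / bi - eps / bi + h / 2"
proof -
  have X0: "X - 1 \<noteq> 0" "X \<noteq> 0" using X by auto
  show ?thesis unfolding stencil_def epsS_eq using h bi X0 eps by (simp add: field_simps power2_eq_square power3_eq_cube)
qed

end

section \<open>The Shishkin mesh\<close>

locale shishkin =
  fixes a eps beta Q :: real and N J :: nat
  assumes eps_pos: "eps > 0" and beta_pos: "beta > 0" and a_pos: "a > 0"
    and Q_pos: "0 < Q" and Q_lt1: "Q < 1" and J_eq: "real J = Q * real N"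
    and N_pos: "0 < N" and trans_pt_le: "trans_pt a eps beta (real N) \<le> Q"
begin

definition "xi = trans_pt a eps beta (real N)"
definition "h = xi / real J"
definition "H = (1 - xi) / (real N - real J)"
definition "x = shishkin_mesh (real N) a eps beta Q N"
definition "k = h / eps"

lemma J_pos: "0 < J"
proof -
  have "0 < Q * real N" using Q_pos N_pos by simp
  then show ?thesis using J_eq by simp
qed

lemma J_lt: "J < N"
proof -
  have "Q * real N < real N" using Q_lt1 N_pos by simp
  then show ?thesis using J_eq by simp
qed

lemma ln_N_pos: "ln (real N) > 0" using J_pos J_lt by simp

lemma xi_pos: "xi > 0"
  unfolding xi_def trans_pt_def using a_pos eps_pos beta_pos ln_N_pos by simp

lemma xi_le_Q: "xi \<le> Q" using trans_pt_le xi_def by simp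

lemma h_pos: "h > 0" unfolding h_def using xi_pos J_pos by simp

lemma H_pos: "H > 0" unfolding H_def using xi_le_Q Q_lt1 J_lt by simp

lemma h_le: "h \<le> 1 / real N"
proof -
  have "h = xi / (Q * real N)" unfolding h_def J_eq ..
  also have "\<dots> \<le> Q / (Q * real N)" using xi_le_Q Q_pos N_pos by (intro divide_right_mono) auto
  also have "\<dots> = 1 / real N" using Q_pos by simp
  finally show ?thesis .
qed

lemma H_ge: "1 / real N \<le> H"
proof -
  have "real N - real J = (1 - Q) * real N" using J_eq by (simp add: algebra_simps)
  then have "H = (1 - xi) / ((1 - Q) * real N)" unfolding H_def by simp
  moreover have "(1 - Q) / ((1 - Q) * real N) \<le> (1 - xi) / ((1 - Q) * real N)"
    using xi_le_Q Q_lt1 N_pos by (intro divide_right_mono) auto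
  ultimately show ?thesis using Q_lt1 by simp
qed

lemma h_le_H: "h \<le> H" using h_le H_ge by simp

lemma x_fine: "i \<le> J \<Longrightarrow> x i = real i * h"
  unfolding x_def shishkin_mesh_def Let_def h_def xi_def J_eq[symmetric] by simp

lemma x_coarse: "J \<le> i \<Longrightarrow> x i = xi + (real i - real J) * H"
proof -
  assume i: "J \<le> i"
  show ?thesis
  proof (cases "i = J")
    case True
    then show ?thesis using x_fine[of i] J_pos unfolding h_def by simp
  next
    case False
    then have "\<not> real i \<le> real J" using i by simp
    then show ?thesis
      unfolding x_def shishkin_mesh_def Let_def H_def xi_def J_eq[symmetric] by simp
  qed
qed

lemma xi_eq: "xi = real J * h" unfolding h_def using J_pos by simp

lemma x_0: "x 0 = 0" using x_fine[of 0] by simp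

lemma x_N: "x N = 1"
proof -
  have "x N = xi + (real N - real J) * H" using x_coarse J_lt by simp
  also have "\<dots> = 1" unfolding H_def using J_lt by simp
  finally show ?thesis .
qed

lemma step_fine: "1 \<le> i \<Longrightarrow> i \<le> J \<Longrightarrow> step x i = h"
  unfolding step_def using x_fine[of i] x_fine[of "i-1"] by (simp add: of_nat_diff algebra_simps)

lemma step_coarse: "J < i \<Longrightarrow> step x i = H"
proof -
  assume i: "J < i"
  then have "J \<le> i - 1" by simp
  then show ?thesis
    unfolding step_def using x_coarse[of i] x_coarse[of "i-1"] i by (simp add: of_nat_diff algebra_simps)
qed

lemma step_le_step_Suc: "1 \<le> i \<Longrightarrow> step x i \<le> step x (i+1)"
  using step_fine[of i] step_fine[of "i+1"] step_coarse[of i] step_coarse[of "i+1"] h_le_H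
  by (cases "i + 1 \<le> J"; cases "i \<le> J") auto

lemma step_pos: "1 \<le> i \<Longrightarrow> step x i > 0"
  using step_fine step_coarse h_pos H_pos by (cases "i \<le> J") auto

lemma x_mono: "i \<le> j \<Longrightarrow> x i \<le> x j"
proof (induction j)
  case 0 then show ?case by simp
next
  case (Suc j)
  then show ?case
  proof (cases "i = Suc j")
    case False
    then have "x i \<le> x j" using Suc by simp
    moreover have "step x (Suc j) > 0" by (rule step_pos) simp
    ultimately show ?thesis unfolding step_def by simp
  qed simp
qed

lemma x_strict: "i < j \<Longrightarrow> x i < x j"
proof -
  assume "i < j"
  then have "x i \<le> x (j - 1)" by (intro x_mono) simp
  moreover have "step x j > 0" using \<open>i < j\<close> by (intro step_pos) simp
  ultimately show ?thesis unfolding step_def by simp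
qed

lemma x_in_unit: "i \<le> N \<Longrightarrow> 0 \<le> x i \<and> x i \<le> 1"
  using x_mono[of 0 i] x_mono[of i N] x_0 x_N by simp

lemma x_interior: "0 < i \<Longrightarrow> i < N \<Longrightarrow> 0 < x i \<and> x i < 1"
  using x_strict[of 0 i] x_strict[of i N] x_0 x_N by simp

lemma exp_neg_xi: "exp (- beta * xi / eps) = real N powr (- a)"
proof -
  have "- beta * xi / eps = - a * ln (real N)"
    unfolding xi_def trans_pt_def using beta_pos eps_pos by (simp add: field_simps)
  then show ?thesis using N_pos by (simp add: powr_def)
qed

lemma k_eq: "k = a * ln (real N) / (beta * Q * real N)"
  unfolding k_def h_def xi_def trans_pt_def J_eq using eps_pos by (simp add: field_simps)

lemma k_pos: "k > 0" unfolding k_def using h_pos eps_pos by simp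

lemma k_le: "k \<le> a / (beta * Q)"
proof -
  have "ln (real N) \<le> real N" using ln_le_minus_one[of "real N"] N_pos by simp
  then have "a * ln (real N) / (beta * Q * real N) \<le> a * real N / (beta * Q * real N)"
    using a_pos beta_pos Q_pos N_pos by (intro divide_right_mono mult_left_mono) auto
  then show ?thesis using k_eq N_pos by simp
qed

lemma eps_k_squared: "eps * k\<^sup>2 = (a / (beta * Q))\<^sup>2 * (eps * real N powr (-2) * (ln (real N))\<^sup>2)"
proof -
  have "real N powr (-2) = 1 / (real N)\<^sup>2" using N_pos by (simp add: powr_minus powr_numeral divide_inverse)
  then show ?thesis unfolding k_eq using N_pos Q_pos beta_pos by (simp add: field_simps power2_eq_square)
qed

end

section \<open>The layer function\<close>

lemma deriv_zero_deriv2_nonneg_at_interior_min: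
  fixes w w1 w2 :: "real \<Rightarrow> real"
  assumes x0: "lo < x0" "x0 < hi" and min: "\<And>y. lo \<le> y \<Longrightarrow> y \<le> hi \<Longrightarrow> w x0 \<le> w y"
    and dw: "\<And>t. lo < t \<Longrightarrow> t < hi \<Longrightarrow> (w has_real_derivative w1 t) (at t)"
    and dw1: "\<And>t. lo < t \<Longrightarrow> t < hi \<Longrightarrow> (w1 has_real_derivative w2 t) (at t)"
  shows "w1 x0 = 0" and "w2 x0 \<ge> 0"
proof -
  show w1_x0: "w1 x0 = 0"
  proof (rule DERIV_local_min[OF dw[OF x0]])
    show "0 < min (x0 - lo) (hi - x0)" using x0 by simp
    show "\<forall>y. \<bar>x0 - y\<bar> < min (x0 - lo) (hi - x0) \<longrightarrow> w x0 \<le> w y"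
      using min by (auto simp: abs_if split: if_splits)
  qed
  show "w2 x0 \<ge> 0"
  proof (rule ccontr)
    assume "\<not> w2 x0 \<ge> 0"
    obtain d where d: "d > 0" and decreasing: "\<And>e. e > 0 \<Longrightarrow> e < d \<Longrightarrow> w1 (x0 + e) < w1 x0"
      using DERIV_neg_dec_right[OF dw1[OF x0]] \<open>\<not> w2 x0 \<ge> 0\<close> by force
    define t where "t = x0 + min d (hi - x0) / 2"
    have t: "x0 < t" "t < hi" "t - x0 < d" unfolding t_def using d x0 by (auto simp: min_def field_simps)
    obtain z where z: "x0 < z" "z < t" "w t - w x0 = (t - x0) * w1 z"
      using MVT2[OF t(1), of w w1] dw x0 t by force
    have "w1 z < 0" using decreasing[of "z - x0"] z t w1_x0 by simp
    then have "(t - x0) * w1 z < 0" using z by (intro mult_pos_neg) auto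
    then have "w t < w x0" using z by simp
    then show False using min[of t] x0 t by simp
  qed
qed

locale layer_function =
  fixes b c b1 b2 c1 c2 :: "real \<Rightarrow> real" and beta p eps B0 B1 B2 C0 C1 C2 :: real
    and v v1 v2 :: "real \<Rightarrow> real"
  assumes beta_pos: "beta > 0" and eps_pos: "eps > 0" and eps_lt1: "eps < 1"
    and b_gt: "\<And>x. 0 \<le> x \<Longrightarrow> x \<le> 1 \<Longrightarrow> b x > beta"
    and c_nonneg: "\<And>x. 0 \<le> x \<Longrightarrow> x \<le> 1 \<Longrightarrow> c x \<ge> 0"
    and b_bound: "\<And>x. 0 \<le> x \<Longrightarrow> x \<le> 1 \<Longrightarrow> \<bar>b x\<bar> \<le> B0"
    and b1_bound: "\<And>x. 0 \<le> x \<Longrightarrow> x \<le> 1 \<Longrightarrow> \<bar>b1 x\<bar> \<le> B1"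
    and b2_bound: "\<And>x. 0 \<le> x \<Longrightarrow> x \<le> 1 \<Longrightarrow> \<bar>b2 x\<bar> \<le> B2"
    and c_bound: "\<And>x. 0 \<le> x \<Longrightarrow> x \<le> 1 \<Longrightarrow> \<bar>c x\<bar> \<le> C0"
    and c1_bound: "\<And>x. 0 \<le> x \<Longrightarrow> x \<le> 1 \<Longrightarrow> \<bar>c1 x\<bar> \<le> C1"
    and c2_bound: "\<And>x. 0 \<le> x \<Longrightarrow> x \<le> 1 \<Longrightarrow> \<bar>c2 x\<bar> \<le> C2"
    and b_deriv: "\<And>x. 0 < x \<Longrightarrow> x < 1 \<Longrightarrow> (b has_real_derivative b1 x) (at x)"
    and b1_deriv: "\<And>x. 0 < x \<Longrightarrow> x < 1 \<Longrightarrow> (b1 has_real_derivative b2 x) (at x)"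
    and c_deriv: "\<And>x. 0 < x \<Longrightarrow> x < 1 \<Longrightarrow> (c has_real_derivative c1 x) (at x)"
    and c1_deriv: "\<And>x. 0 < x \<Longrightarrow> x < 1 \<Longrightarrow> (c1 has_real_derivative c2 x) (at x)"
    and v_cont: "continuous_on {0..1} v" and v_0: "v 0 = p" and v_1: "v 1 = 0"
    and v_deriv: "\<And>x. 0 < x \<Longrightarrow> x < 1 \<Longrightarrow> (v has_real_derivative v1 x) (at x)"
    and v1_deriv: "\<And>x. 0 < x \<Longrightarrow> x < 1 \<Longrightarrow> (v1 has_real_derivative v2 x) (at x)"
    and ode: "\<And>x. 0 < x \<Longrightarrow> x < 1 \<Longrightarrow> eps * v2 x + b x * v1 x - c x * v x = 0"
begin

definition "W t = \<bar>p\<bar> * exp (- beta * t / eps)"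

lemma W_nonneg: "W t \<ge> 0" unfolding W_def by simp

lemma W_antimono: "s \<le> t \<Longrightarrow> W t \<le> W s"
  unfolding W_def using beta_pos eps_pos by (auto intro!: mult_left_mono divide_right_mono)

lemma W_shift: "W (t - d) = exp (beta * d / eps) * W t"
proof -
  have "- beta * (t - d) / eps = beta * d / eps + (- beta * t / eps)" using eps_pos by (simp add: field_simps)
  then have "exp (- beta * (t - d) / eps) = exp (beta * d / eps) * exp (- beta * t / eps)"
    by (simp only: exp_add)
  then show ?thesis unfolding W_def by simp
qed

lemma bounds_nonneg: "B0 \<ge> 0" "B1 \<ge> 0" "B2 \<ge> 0" "C0 \<ge> 0" "C1 \<ge> 0" "C2 \<ge> 0"
  using b_bound[of 0] b1_bound[of 0] b2_bound[of 0] c_bound[of 0] c1_bound[of 0] c2_bound[of 0] by auto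

text \<open>Maximum principle with the barrier \<open>(\<bar>p\<bar> + \<delta>) exp (- beta t / eps)\<close>, a strict supersolution
  because \<open>b > beta\<close>.\<close>
lemma v_le_barrier:
  assumes \<delta>: "\<delta> > 0" and s: "s = 1 \<or> s = -1" and x: "0 \<le> x" "x \<le> 1"
  shows "s * v x \<le> (\<bar>p\<bar> + \<delta>) * exp (- beta * x / eps)"
proof (rule ccontr)
  assume violated: "\<not> ?thesis"
  define E where "E t = exp (- beta * t / eps)" for t
  define w where "w t = (\<bar>p\<bar> + \<delta>) * E t - s * v t" for t
  define w1 where "w1 t = (\<bar>p\<bar> + \<delta>) * (- beta / eps * E t) - s * v1 t" for t
  define w2 where "w2 t = (\<bar>p\<bar> + \<delta>) * ((beta / eps)\<^sup>2 * E t) - s * v2 t" for t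
  have "continuous_on {0..1} w"
    unfolding w_def E_def using eps_pos by (intro continuous_intros v_cont) auto
  obtain x0 where x0: "x0 \<in> {0..1}" and min: "\<And>y. y \<in> {0..1} \<Longrightarrow> w x0 \<le> w y"
    using continuous_attains_inf[OF compact_Icc _ \<open>continuous_on {0..1} w\<close>] by auto
  have "w x < 0" using violated unfolding w_def E_def by simp
  then have w_x0: "w x0 < 0" using min[of x] x by simp
  moreover have "w 0 > 0" "w 1 > 0" unfolding w_def E_def using v_0 v_1 \<delta> s by (auto simp: abs_if)
  ultimately have "x0 \<noteq> 0" "x0 \<noteq> 1" by auto
  then have x0_interior: "0 < x0" "x0 < 1" using x0 by auto
  have min': "w x0 \<le> w y" if "0 \<le> y" "y \<le> 1" for y using min that by simp
  have dw: "(w has_real_derivative w1 t) (at t)" if "0 < t" "t < 1" for t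
    unfolding w_def w1_def E_def using eps_pos
    by (auto intro!: derivative_eq_intros v_deriv that simp: field_simps)
  have dw1: "(w1 has_real_derivative w2 t) (at t)" if "0 < t" "t < 1" for t
    unfolding w1_def w2_def E_def using eps_pos
    by (auto intro!: derivative_eq_intros v1_deriv that simp: field_simps power2_eq_square)
  note critical = deriv_zero_deriv2_nonneg_at_interior_min[OF x0_interior min' dw dw1]
  define A where "A = (\<bar>p\<bar> + \<delta>) * E x0"
  have "s * v1 x0 = A * (- beta / eps)" using critical(1) unfolding w1_def A_def by (simp add: mult_ac)
  moreover have "s * v x0 = A - w x0" unfolding w_def A_def by simp
  moreover have "eps * v2 x0 = c x0 * v x0 - b x0 * v1 x0" using ode[OF x0_interior] by simp
  then have "eps * (s * v2 x0) = c x0 * (s * v x0) - b x0 * (s * v1 x0)"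
    by (metis mult.left_commute right_diff_distrib)
  moreover have "eps * w2 x0 = A * (beta\<^sup>2 / eps) - eps * (s * v2 x0)"
    unfolding w2_def A_def using eps_pos by (simp add: power2_eq_square field_simps)
  ultimately have "eps * w2 x0 = A * (beta\<^sup>2 / eps) - (c x0 * (A - w x0) - b x0 * (A * (- beta / eps)))"
    by simp
  also have "\<dots> = A * (beta / eps * (beta - b x0) - c x0) + c x0 * w x0"
    by (simp add: algebra_simps power2_eq_square diff_divide_distrib add_divide_distrib)
  also have "\<dots> < 0"
  proof -
    have "beta / eps * (beta - b x0) < 0"
      using b_gt[of x0] x0_interior beta_pos eps_pos by (intro mult_pos_neg) auto
    then have "A * (beta / eps * (beta - b x0) - c x0) < 0"
      using \<delta> c_nonneg[of x0] x0_interior unfolding A_def E_def by (simp add: mult_pos_neg)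
    moreover have "c x0 * w x0 \<le> 0" using c_nonneg[of x0] x0_interior w_x0 by (simp add: mult_nonneg_nonpos)
    ultimately show ?thesis by simp
  qed
  finally have "eps * w2 x0 < 0" .
  then show False using critical(2) eps_pos by (simp add: mult_less_0_iff)
qed

lemma abs_v_le_W:
  assumes "0 \<le> x" "x \<le> 1"
  shows "\<bar>v x\<bar> \<le> W x"
proof -
  define E where "E = exp (- beta * x / eps)"
  have E: "E > 0" unfolding E_def by simp
  have "s * v x \<le> \<bar>p\<bar> * E" if s: "s = 1 \<or> s = -1" for s
  proof (rule field_le_epsilon)
    fix e :: real assume "e > 0"
    have "s * v x \<le> (\<bar>p\<bar> + e / E) * E"
      unfolding E_def using v_le_barrier[OF _ s assms] \<open>e > 0\<close> E by simp
    also have "\<dots> = \<bar>p\<bar> * E + e" using E by (simp add: field_simps)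
    finally show "s * v x \<le> \<bar>p\<bar> * E + e" .
  qed
  from this[of 1] this[of "-1"] show ?thesis unfolding W_def E_def by auto
qed

lemma v_mean_value:
  assumes "0 \<le> lo" "lo < hi" "hi \<le> 1"
  obtains z where "lo < z" "z < hi" "v hi - v lo = (hi - lo) * v1 z"
proof -
  have "continuous_on {lo..hi} v" by (rule continuous_on_subset[OF v_cont]) (use assms in auto)
  moreover have "\<And>x. lo < x \<Longrightarrow> x < hi \<Longrightarrow> v differentiable (at x)"
    using v_deriv assms real_differentiable_def by (meson le_less_trans less_le_trans)
  ultimately obtain l z where z: "lo < z" "z < hi" "DERIV v z :> l" "v hi - v lo = (hi - lo) * l"
    using MVT[OF assms(2)] by blast
  moreover have "l = v1 z" using DERIV_unique[OF z(3) v_deriv] z assms by simp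
  ultimately show ?thesis using that by blast
qed

text \<open>Mean value theorem on an interval of length \<open>eps/2\<close> next to \<open>x\<close>.\<close>
lemma v1_small_nearby:
  assumes x: "0 < x" "x < 1"
  obtains y where "0 < y" "y < 1" "x - eps / 2 \<le> y" "y \<le> x + eps / 2"
    "\<bar>v1 y\<bar> \<le> 4 * exp (beta / 2) * W x / eps"
proof -
  define d where "d = eps / 2"
  define e where "e = exp (beta / 2)"
  have d: "d > 0" "d < 1/2" using eps_pos eps_lt1 by (auto simp: d_def)
  have "W x \<le> e * W x" unfolding e_def using beta_pos W_nonneg[of x] by (simp add: mult_le_cancel_right1)
  moreover have W_left: "W (x - d) = e * W x" using W_shift[of x d] unfolding e_def d_def using eps_pos by simp
  ultimately have v_sum: "\<bar>v lo\<bar> + \<bar>v hi\<bar> \<le> 2 * e * W x"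
    if "x - d \<le> lo" "lo < hi" "0 \<le> lo" "hi \<le> 1" for lo hi
    using abs_v_le_W[of lo] abs_v_le_W[of hi] W_antimono[of "x - d" lo] W_antimono[of "x - d" hi] that
    by auto
  obtain lo hi where lo_hi: "x - d \<le> lo" "0 \<le> lo" "hi \<le> x + d" "hi \<le> 1" "hi - lo = d"
  proof (cases "x + d \<le> 1")
    case True then show ?thesis using that[of x "x + d"] x d by simp
  next
    case False then show ?thesis using that[of "x - d" x] d x by simp
  qed
  then obtain z where z: "lo < z" "z < hi" "v hi - v lo = (hi - lo) * v1 z"
    using v_mean_value[of lo hi] d by auto
  have "\<bar>v1 z\<bar> * d = \<bar>v hi - v lo\<bar>" using z lo_hi d by (simp add: abs_mult)
  also have "\<dots> \<le> \<bar>v lo\<bar> + \<bar>v hi\<bar>" using abs_triangle_ineq4[of "v hi" "v lo"] by linarith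
  also have "\<dots> \<le> 2 * e * W x" using v_sum lo_hi z by simp
  finally have "\<bar>v1 z\<bar> * d \<le> 2 * e * W x" .
  then have "\<bar>v1 z\<bar> \<le> 4 * e * W x / eps" using eps_pos unfolding d_def by (simp add: field_simps)
  then show ?thesis using that[of z] z lo_hi unfolding d_def e_def by simp
qed

lemma flux_has_derivative:
  assumes "0 < t" "t < 1"
  shows "((\<lambda>t. eps * v1 t + b t * v t) has_real_derivative (c t + b1 t) * v t) (at t)"
proof -
  have "((\<lambda>t. eps * v1 t + b t * v t) has_real_derivative eps * v2 t + (b1 t * v t + b t * v1 t)) (at t)"
    using assms by (auto intro!: derivative_eq_intros v1_deriv b_deriv v_deriv)
  moreover have "eps * v2 t + (b1 t * v t + b t * v1 t) = (c t + b1 t) * v t"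
    using ode[OF assms] by (simp add: algebra_simps)
  ultimately show ?thesis by simp
qed

definition "K1 = exp (beta / 2) * (4 + 2 * B0 + C0 + B1)"

text \<open>The flux \<open>eps v1 + b v\<close> varies slowly, so its value at \<open>x\<close> is controlled by its value at the
  nearby point supplied by \<open>v1_small_nearby\<close>.\<close>
lemma abs_v1_le:
  assumes x: "0 < x" "x < 1"
  shows "\<bar>v1 x\<bar> \<le> K1 * W x / eps"
proof -
  define F where "F t = eps * v1 t + b t * v t" for t
  define e where "e = exp (beta / 2)"
  have e: "e \<ge> 1" unfolding e_def using beta_pos by simp
  obtain y where y: "0 < y" "y < 1" "x - eps / 2 \<le> y" "y \<le> x + eps / 2"
    and v1_y: "\<bar>v1 y\<bar> \<le> 4 * e * W x / eps"
    using v1_small_nearby[OF x] unfolding e_def by blast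
  have W_near: "W t \<le> e * W x" if "x - eps / 2 \<le> t" for t
    using W_antimono[OF that] W_shift[of x "eps / 2"] eps_pos unfolding e_def by simp
  have v_near: "\<bar>v t\<bar> \<le> e * W x" if "min x y \<le> t" "t \<le> max x y" for t
  proof -
    have "x - eps / 2 \<le> t" "0 \<le> t" "t \<le> 1" using that x y eps_pos by (auto simp: min_def max_def split: if_splits)
    then show ?thesis using abs_v_le_W[of t] W_near[of t] by simp
  qed
  have "\<bar>F x - F y\<bar> \<le> (C0 + B1) * (e * W x) * \<bar>x - y\<bar>"
  proof (rule abs_diff_le_of_deriv_bound_segment)
    fix t assume t: "min y x \<le> t" "t \<le> max y x"
    then have "0 < t" "t < 1" using x y by auto
    then show "(F has_real_derivative (c t + b1 t) * v t) (at t)"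
      unfolding F_def by (rule flux_has_derivative)
    have "\<bar>c t + b1 t\<bar> \<le> C0 + B1"
      using c_bound[of t] b1_bound[of t] \<open>0 < t\<close> \<open>t < 1\<close> by (auto intro: order.trans[OF abs_triangle_ineq])
    then show "\<bar>(c t + b1 t) * v t\<bar> \<le> (C0 + B1) * (e * W x)"
      unfolding abs_mult using v_near[of t] t by (intro mult_mono) (auto simp: min.commute max.commute)
  qed
  also have "\<dots> \<le> (C0 + B1) * (e * W x)"
    using y eps_lt1 bounds_nonneg e W_nonneg[of x] by (intro mult_left_le) auto
  finally have F_diff: "\<bar>F x - F y\<bar> \<le> (C0 + B1) * (e * W x)" .
  have "\<bar>F y\<bar> \<le> eps * \<bar>v1 y\<bar> + B0 * (e * W x)"
    unfolding F_def using eps_pos b_bound[of y] v_near[of y] y bounds_nonneg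
    by (auto simp: abs_mult intro!: order.trans[OF abs_triangle_ineq] add_mono mult_mono)
  moreover have "\<bar>b x * v x\<bar> \<le> B0 * (e * W x)"
    unfolding abs_mult using b_bound[of x] v_near[of x] x bounds_nonneg by (intro mult_mono) auto
  moreover have "eps * \<bar>v1 y\<bar> \<le> 4 * e * W x" using v1_y eps_pos by (simp add: field_simps)
  moreover have "eps * \<bar>v1 x\<bar> \<le> \<bar>F x - F y\<bar> + \<bar>F y\<bar> + \<bar>b x * v x\<bar>"
    unfolding F_def using eps_pos by (simp add: abs_mult[symmetric])
  ultimately have "eps * \<bar>v1 x\<bar> \<le> K1 * W x"
    using F_diff unfolding K1_def e_def[symmetric] by (simp add: algebra_simps)
  then show ?thesis using eps_pos by (simp add: field_simps)
qed


lemma divide_eps_power_mono: "n \<le> m \<Longrightarrow> X \<ge> 0 \<Longrightarrow> X / eps ^ n \<le> X / eps ^ m"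
proof -
  assume nm: "n \<le> m" and X: "X \<ge> 0"
  have "eps ^ m \<le> eps ^ n" using nm eps_pos eps_lt1 by (intro power_decreasing) auto
  then show ?thesis using X eps_pos by (intro divide_left_mono) auto
qed

definition "K2 = C0 + B0 * K1"

lemma K1_nonneg: "K1 \<ge> 0" unfolding K1_def using bounds_nonneg by simp
lemma K2_nonneg: "K2 \<ge> 0" unfolding K2_def using bounds_nonneg K1_nonneg by simp

lemma v2_eq: "0 < x \<Longrightarrow> x < 1 \<Longrightarrow> v2 x = (c x * v x - b x * v1 x) / eps"
  using ode[of x] eps_pos by (simp add: field_simps)

lemma abs_v2_le:
  assumes x: "0 < x" "x < 1"
  shows "\<bar>v2 x\<bar> \<le> K2 * W x / eps\<^sup>2"
proof -
  have "\<bar>c x * v x - b x * v1 x\<bar> \<le> \<bar>c x\<bar> * \<bar>v x\<bar> + \<bar>b x\<bar> * \<bar>v1 x\<bar>"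
    by (metis abs_mult abs_triangle_ineq4)
  also have "\<dots> \<le> C0 * W x + B0 * (K1 * W x / eps)"
    using c_bound[of x] b_bound[of x] abs_v_le_W[of x] abs_v1_le[OF x] x
    by (intro add_mono mult_mono) (auto simp: W_nonneg)
  also have "\<dots> \<le> C0 * (W x / eps) + B0 * (K1 * W x / eps)"
    using divide_eps_power_mono[of 0 1 "W x"] W_nonneg bounds_nonneg by (intro add_mono mult_left_mono) auto
  also have "\<dots> = K2 * W x / eps" unfolding K2_def by (simp add: algebra_simps add_divide_distrib)
  finally have "\<bar>c x * v x - b x * v1 x\<bar> / eps \<le> K2 * W x / eps / eps"
    using eps_pos by (intro divide_right_mono) auto
  then show ?thesis using v2_eq[OF x] eps_pos by (simp add: power2_eq_square)
qed

definition "v3 t = (c1 t * v t + c t * v1 t - b1 t * v1 t - b t * v2 t) / eps"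

lemma v2_has_derivative:
  assumes x: "0 < x" "x < 1"
  shows "(v2 has_real_derivative v3 x) (at x)"
proof -
  have "((\<lambda>t. (c t * v t - b t * v1 t) / eps) has_real_derivative v3 x) (at x)"
    unfolding v3_def using x eps_pos
    by (auto intro!: derivative_eq_intros c_deriv v_deriv b_deriv v1_deriv simp: field_simps)
  then show ?thesis
    by (rule has_field_derivative_transform_within_open[where S="{0<..<1}"]) (use x v2_eq in auto)
qed

definition "K3 = C1 + C0 * K1 + B1 * K1 + B0 * K2"

lemma abs_v3_le:
  assumes x: "0 < x" "x < 1"
  shows "\<bar>v3 x\<bar> \<le> K3 * W x / eps ^ 3"
proof -
  have W: "W x \<ge> 0" by (rule W_nonneg)
  have "\<bar>c1 x * v x + c x * v1 x - b1 x * v1 x - b x * v2 x\<bar>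
      \<le> \<bar>c1 x\<bar> * \<bar>v x\<bar> + \<bar>c x\<bar> * \<bar>v1 x\<bar> + \<bar>b1 x\<bar> * \<bar>v1 x\<bar> + \<bar>b x\<bar> * \<bar>v2 x\<bar>"
    by (simp add: abs_mult[symmetric])
  also have "\<dots> \<le> C1 * W x + C0 * (K1 * W x / eps) + B1 * (K1 * W x / eps) + B0 * (K2 * W x / eps\<^sup>2)"
    using c1_bound[of x] c_bound[of x] b1_bound[of x] b_bound[of x] abs_v_le_W[of x] abs_v1_le[OF x] abs_v2_le[OF x] x
    by (intro add_mono mult_mono) (auto simp: W_nonneg)
  also have "\<dots> \<le> C1 * (W x / eps\<^sup>2) + C0 * (K1 * W x / eps\<^sup>2) + B1 * (K1 * W x / eps\<^sup>2) + B0 * (K2 * W x / eps\<^sup>2)"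
    using divide_eps_power_mono[of 0 2 "W x"] divide_eps_power_mono[of 1 2 "K1 * W x"] W bounds_nonneg K1_nonneg
    by (intro add_mono mult_left_mono) auto
  also have "\<dots> = K3 * W x / eps\<^sup>2" unfolding K3_def by (simp add: algebra_simps add_divide_distrib)
  finally have "\<bar>c1 x * v x + c x * v1 x - b1 x * v1 x - b x * v2 x\<bar> / eps \<le> K3 * W x / eps\<^sup>2 / eps"
    using eps_pos by (intro divide_right_mono) auto
  then show ?thesis unfolding v3_def using eps_pos by (simp add: power2_eq_square power3_eq_cube)
qed


section \<open>Truncation error on the fine mesh\<close>

definition "KM kmax = B2 * K1 + 2 * B1 * K2 + B1 * kmax * K3 + C2 + 2 * C1 * K1 + C0 * K2"
definition "Km1 = B1 * K1 + C1 + C0 * K1"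
definition "trunc_const kmax = (exp (B0 * kmax))\<^sup>2 * KM kmax * (2 + B0 * kmax) + Km1 * B0\<^sup>2 * exp (B0 * kmax) / (2 * beta)"

lemma K3_nonneg: "K3 \<ge> 0" unfolding K3_def using bounds_nonneg K1_nonneg K2_nonneg by simp

lemma b_lipschitz: "0 < s \<Longrightarrow> s < 1 \<Longrightarrow> 0 < t \<Longrightarrow> t < 1 \<Longrightarrow> \<bar>b t - b s\<bar> \<le> B1 * \<bar>t - s\<bar>"
  by (rule abs_diff_le_of_deriv_bound_segment[where f'=b1]) (auto intro!: b_deriv b1_bound simp: min_def max_def split: if_splits)

text \<open>Freezing \<open>b\<close> at the node \<open>s0\<close> gives \<open>eps v'' + bi v' = m\<close> with the slowly varying
  right-hand side \<open>m = (bi - b) v' + c v\<close>.  Replacing \<open>m\<close> by its linear Taylor polynomial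
  \<open>m0 + m1 (t - s0)\<close>, \<open>v\<close> is a constant, plus a multiple of \<open>exp (- bi (t - s0) / eps)\<close>, plus
  explicit particular solutions, plus \<open>P (t) exp (- bi (t - s0) / eps)\<close>, where \<open>P' = G Ef / eps\<close>
  and \<open>G = O (h^3)\<close>.  The fitted stencil kills the first two parts and maps the particular
  solutions to \<open>m0 + m1 L2\<close>, where \<open>L2 = O (eps k^2)\<close>; this gives \<open>frozen_LN_eq\<close>.\<close>

context
  fixes s0 h kmax :: real
  assumes s0h: "0 \<le> s0 - h" "s0 + h < 1" and h: "h > 0" and kb: "h / eps \<le> kmax"
begin

lemma s0_in: "0 < s0" "s0 < 1" using s0h h by auto

definition "Wh = W (s0 - h)"

lemma Wh_nonneg: "Wh \<ge> 0" unfolding Wh_def by (rule W_nonneg)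

lemma kmax_nonneg: "kmax \<ge> 0" using kb h eps_pos by (smt (verit) divide_pos_pos)

lemma abs_derivs_le_Wh:
  assumes t: "0 < t" "t < 1" "s0 - h \<le> t"
  shows "\<bar>v t\<bar> \<le> Wh" "\<bar>v1 t\<bar> \<le> K1 * Wh / eps" "\<bar>v2 t\<bar> \<le> K2 * Wh / eps\<^sup>2" "\<bar>v3 t\<bar> \<le> K3 * Wh / eps ^ 3"
proof -
  have Wt: "W t \<le> Wh" unfolding Wh_def by (rule W_antimono[OF t(3)])
  show "\<bar>v t\<bar> \<le> Wh" using abs_v_le_W[of t] t Wt by simp
  show "\<bar>v1 t\<bar> \<le> K1 * Wh / eps"
    using abs_v1_le[of t] t Wt K1_nonneg eps_pos
    by (smt (verit, ccfv_SIG) divide_right_mono mult_left_mono)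
  show "\<bar>v2 t\<bar> \<le> K2 * Wh / eps\<^sup>2"
    using abs_v2_le[of t] t Wt K2_nonneg eps_pos
    by (smt (verit, ccfv_SIG) divide_right_mono mult_left_mono zero_less_power)
  show "\<bar>v3 t\<bar> \<le> K3 * Wh / eps ^ 3"
    using abs_v3_le[of t] t Wt K3_nonneg eps_pos
    by (smt (verit, ccfv_SIG) divide_right_mono mult_left_mono zero_less_power)
qed

abbreviation "bi \<equiv> b s0"

lemma bi_gt_beta: "bi > beta" using b_gt s0_in by simp
lemma bi_le: "bi \<le> B0" using b_bound[of s0] s0_in by simp

definition "m t = (bi - b t) * v1 t + c t * v t" for t
definition "dm t = - b1 t * v1 t + (bi - b t) * v2 t + c1 t * v t + c t * v1 t" for t
definition "ddm t = - b2 t * v1 t - 2 * b1 t * v2 t + (bi - b t) * v3 t + c2 t * v t + 2 * c1 t * v1 t + c t * v2 t" for t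

lemma m_has_derivative: "0 < t \<Longrightarrow> t < 1 \<Longrightarrow> (m has_real_derivative dm t) (at t)"
  unfolding m_def dm_def by (auto intro!: derivative_eq_intros b_deriv v1_deriv c_deriv v_deriv simp: algebra_simps)

lemma dm_has_derivative: "0 < t \<Longrightarrow> t < 1 \<Longrightarrow> (dm has_real_derivative ddm t) (at t)"
  unfolding dm_def ddm_def
  by (auto intro!: derivative_eq_intros b_deriv b1_deriv v1_deriv v2_has_derivative c_deriv c1_deriv v_deriv simp: algebra_simps)

lemma abs_ddm_le:
  assumes t: "s0 - h < t" "t < s0 + h"
  shows "\<bar>ddm t\<bar> \<le> KM kmax * Wh / eps\<^sup>2"
proof -
  have t01: "0 < t" "t < 1" using t s0h by auto
  note vb = abs_derivs_le_Wh[OF t01, simplified, OF less_imp_le[OF t(1)]]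
  have bd: "\<bar>bi - b t\<bar> \<le> B1 * h"
  proof -
    have "\<bar>b t - b s0\<bar> \<le> B1 * \<bar>t - s0\<bar>" by (rule b_lipschitz[OF s0_in t01])
    also have "\<dots> \<le> B1 * h" using t bounds_nonneg by (intro mult_left_mono) auto
    finally show ?thesis by (simp add: abs_minus_commute)
  qed
  have e1: "\<bar>b2 t * v1 t\<bar> \<le> B2 * (K1 * Wh / eps)"
    using b2_bound[of t] t01 vb(2) by (intro abs_mult_le) auto
  have e2: "\<bar>2 * b1 t * v2 t\<bar> \<le> 2 * B1 * (K2 * Wh / eps\<^sup>2)"
    using b1_bound[of t] t01 vb(3) by (intro abs_mult_le) auto
  have e3: "\<bar>(bi - b t) * v3 t\<bar> \<le> B1 * h * (K3 * Wh / eps ^ 3)"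
    using bd vb(4) by (intro abs_mult_le) auto
  have e4: "\<bar>c2 t * v t\<bar> \<le> C2 * Wh"
    using c2_bound[of t] t01 vb(1) by (intro abs_mult_le) auto
  have e5: "\<bar>2 * c1 t * v1 t\<bar> \<le> 2 * C1 * (K1 * Wh / eps)"
    using c1_bound[of t] t01 vb(2) by (intro abs_mult_le) auto
  have e6: "\<bar>c t * v2 t\<bar> \<le> C0 * (K2 * Wh / eps\<^sup>2)"
    using c_bound[of t] t01 vb(3) by (intro abs_mult_le) auto
  have "\<bar>ddm t\<bar> \<le> \<bar>b2 t * v1 t\<bar> + \<bar>2 * b1 t * v2 t\<bar> + \<bar>(bi - b t) * v3 t\<bar> + \<bar>c2 t * v t\<bar> + \<bar>2 * c1 t * v1 t\<bar> + \<bar>c t * v2 t\<bar>"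
    unfolding ddm_def by linarith
  also have "\<dots> \<le> B2 * (K1 * Wh / eps) + 2 * B1 * (K2 * Wh / eps\<^sup>2) + B1 * h * (K3 * Wh / eps ^ 3)
      + C2 * Wh + 2 * C1 * (K1 * Wh / eps) + C0 * (K2 * Wh / eps\<^sup>2)"
    using e1 e2 e3 e4 e5 e6 by linarith
  also have "\<dots> \<le> B2 * (K1 * Wh / eps\<^sup>2) + 2 * B1 * (K2 * Wh / eps\<^sup>2) + B1 * kmax * (K3 * Wh / eps\<^sup>2)
      + C2 * (Wh / eps\<^sup>2) + 2 * C1 * (K1 * Wh / eps\<^sup>2) + C0 * (K2 * Wh / eps\<^sup>2)"
  proof -
    have w0: "K1 * Wh \<ge> 0" "Wh \<ge> 0" "K3 * Wh \<ge> 0" using K1_nonneg Wh_nonneg K3_nonneg by auto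
    have a1: "K1 * Wh / eps \<le> K1 * Wh / eps\<^sup>2" using divide_eps_power_mono[of 1 2 "K1 * Wh"] w0 by simp
    have a2: "Wh \<le> Wh / eps\<^sup>2" using divide_eps_power_mono[of 0 2 Wh] w0 by simp
    have a3: "h * (K3 * Wh / eps ^ 3) \<le> kmax * (K3 * Wh / eps\<^sup>2)"
    proof -
      have "h * (K3 * Wh / eps ^ 3) = (h / eps) * (K3 * Wh / eps\<^sup>2)" using eps_pos
        by (simp add: field_simps power2_eq_square power3_eq_cube)
      also have "\<dots> \<le> kmax * (K3 * Wh / eps\<^sup>2)" using kb w0 by (intro mult_right_mono) auto
      finally show ?thesis .
    qed
    have "B2 * (K1 * Wh / eps) \<le> B2 * (K1 * Wh / eps\<^sup>2)" using a1 bounds_nonneg by (intro mult_left_mono) auto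
    moreover have "B1 * h * (K3 * Wh / eps ^ 3) \<le> B1 * kmax * (K3 * Wh / eps\<^sup>2)"
      using mult_left_mono[OF a3, of B1] bounds_nonneg by (simp add: mult.assoc)
    moreover have "C2 * Wh \<le> C2 * (Wh / eps\<^sup>2)" using a2 bounds_nonneg by (intro mult_left_mono) auto
    moreover have "2 * C1 * (K1 * Wh / eps) \<le> 2 * C1 * (K1 * Wh / eps\<^sup>2)" using a1 bounds_nonneg by (intro mult_left_mono) auto
    ultimately show ?thesis by linarith
  qed
  also have "\<dots> = KM kmax * Wh / eps\<^sup>2" unfolding KM_def by (simp add: algebra_simps add_divide_distrib)
  finally show ?thesis .
qed

lemma KM_nonneg: "KM kmax \<ge> 0"
  unfolding KM_def using bounds_nonneg K1_nonneg K2_nonneg K3_nonneg kmax_nonneg by simp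

definition "m0 = m s0"
definition "m1 = dm s0"

lemma m0_eq: "m0 = c s0 * v s0" unfolding m0_def m_def by simp

lemma abs_m1_le: "\<bar>m1\<bar> \<le> Km1 * Wh / eps"
proof -
  note vb = abs_derivs_le_Wh[OF s0_in, simplified, OF _]
  have vb0: "\<bar>v s0\<bar> \<le> Wh" "\<bar>v1 s0\<bar> \<le> K1 * Wh / eps" using abs_derivs_le_Wh[OF s0_in] h by auto
  have "\<bar>m1\<bar> \<le> \<bar>b1 s0 * v1 s0\<bar> + \<bar>c1 s0 * v s0\<bar> + \<bar>c s0 * v1 s0\<bar>"
    unfolding m1_def dm_def by simp
  also have "\<dots> \<le> B1 * (K1 * Wh / eps) + C1 * Wh + C0 * (K1 * Wh / eps)"
    using b1_bound[of s0] c1_bound[of s0] c_bound[of s0] s0_in vb0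
    by (intro add_mono abs_mult_le) auto
  also have "\<dots> \<le> B1 * (K1 * Wh / eps) + C1 * (Wh / eps) + C0 * (K1 * Wh / eps)"
    using divide_eps_power_mono[of 0 1 Wh] Wh_nonneg bounds_nonneg by (intro add_mono mult_left_mono) auto
  also have "\<dots> = Km1 * Wh / eps" unfolding Km1_def by (simp add: algebra_simps add_divide_distrib)
  finally show ?thesis .
qed

lemma in_unit_near_s0: "s0 - h < t \<Longrightarrow> t < s0 + h \<Longrightarrow> 0 < t \<and> t < 1" using s0h by auto

lemma segment_near_s0: "s0 - h < t \<Longrightarrow> t < s0 + h \<Longrightarrow> min s0 t \<le> y \<Longrightarrow> y \<le> max s0 t \<Longrightarrow> s0 - h < y \<and> y < s0 + h"
  using h by (auto simp: min_def max_def split: if_splits)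

definition "R t = m t - m0 - m1 * (t - s0)" for t

lemma abs_R_le:
  assumes t: "s0 - h < t" "t < s0 + h"
  shows "\<bar>R t\<bar> \<le> KM kmax * Wh / eps\<^sup>2 * h * h"
proof -
  have d1: "\<bar>dm y - dm s0\<bar> \<le> KM kmax * Wh / eps\<^sup>2 * h" if y: "s0 - h < y" "y < s0 + h" for y
  proof -
    have "\<bar>dm y - dm s0\<bar> \<le> KM kmax * Wh / eps\<^sup>2 * \<bar>y - s0\<bar>"
      by (rule abs_diff_le_of_deriv_bound_segment[where f'=ddm]) (use segment_near_s0[OF y] in \<open>auto intro!: dm_has_derivative abs_ddm_le dest: in_unit_near_s0\<close>)
    also have "\<dots> \<le> KM kmax * Wh / eps\<^sup>2 * h"
      using y KM_nonneg Wh_nonneg eps_pos by (intro mult_left_mono) auto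
    finally show ?thesis .
  qed
  have "\<bar>R t - R s0\<bar> \<le> KM kmax * Wh / eps\<^sup>2 * h * \<bar>t - s0\<bar>"
  proof (rule abs_diff_le_of_deriv_bound_segment[where f'="\<lambda>y. dm y - m1"])
    fix y assume "min s0 t \<le> y" "y \<le> max s0 t"
    then have y: "s0 - h < y" "y < s0 + h" using segment_near_s0[OF t] by auto
    show "(R has_real_derivative dm y - m1) (at y)"
      unfolding R_def using in_unit_near_s0[OF y] by (auto intro!: derivative_eq_intros m_has_derivative)
    show "\<bar>dm y - m1\<bar> \<le> KM kmax * Wh / eps\<^sup>2 * h" using d1[OF y] unfolding m1_def .
  qed
  also have "\<dots> \<le> KM kmax * Wh / eps\<^sup>2 * h * h"
    using t KM_nonneg Wh_nonneg eps_pos h by (intro mult_left_mono) auto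
  finally show ?thesis unfolding R_def m0_def by simp
qed

definition "G t = eps * v1 t + bi * v t - m0 * (t - s0) - m1 * (t - s0)\<^sup>2 / 2 - (eps * v1 s0 + bi * v s0)" for t

lemma G_has_derivative: "0 < t \<Longrightarrow> t < 1 \<Longrightarrow> (G has_real_derivative R t) (at t)"
proof -
  assume t: "0 < t" "t < 1"
  have "(G has_real_derivative eps * v2 t + bi * v1 t - m0 - m1 * (t - s0)) (at t)"
    unfolding G_def using t by (auto intro!: derivative_eq_intros v_deriv v1_deriv simp: power2_eq_square field_simps)
  moreover have "eps * v2 t + bi * v1 t - m0 - m1 * (t - s0) = R t"
    unfolding R_def m_def using ode[OF t] by (simp add: algebra_simps)
  ultimately show ?thesis by simp
qed

lemma abs_G_le:
  assumes t: "s0 - h < t" "t < s0 + h"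
  shows "\<bar>G t\<bar> \<le> KM kmax * Wh / eps\<^sup>2 * h * h * h"
proof -
  have "\<bar>G t - G s0\<bar> \<le> KM kmax * Wh / eps\<^sup>2 * h * h * \<bar>t - s0\<bar>"
  proof (rule abs_diff_le_of_deriv_bound_segment[where f'=R])
    fix y assume "min s0 t \<le> y" "y \<le> max s0 t"
    then have y: "s0 - h < y" "y < s0 + h" using segment_near_s0[OF t] by auto
    show "(G has_real_derivative R y) (at y)" using G_has_derivative in_unit_near_s0[OF y] by auto
    show "\<bar>R y\<bar> \<le> KM kmax * Wh / eps\<^sup>2 * h * h" by (rule abs_R_le[OF y])
  qed
  also have "\<dots> \<le> KM kmax * Wh / eps\<^sup>2 * h * h * h"
    using t KM_nonneg Wh_nonneg eps_pos h by (intro mult_left_mono) auto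
  finally show ?thesis unfolding G_def by simp
qed

lemma bi_pos: "bi > 0" using bi_gt_beta beta_pos by simp

definition "a_const = v s0 + eps * v1 s0 / bi"
definition "a_exp = v s0 - a_const"
definition "P_shift = - a_exp - m0 * eps / bi\<^sup>2 + m1 * eps\<^sup>2 / bi ^ 3"
definition "q t = v t - a_const - m0 * ((t - s0) / bi - eps / bi\<^sup>2) - m1 * ((t - s0)\<^sup>2 / (2 * bi) - eps * (t - s0) / bi\<^sup>2 + eps\<^sup>2 / bi ^ 3)" for t
definition "q1 t = v1 t - m0 / bi - m1 * ((t - s0) / bi - eps / bi\<^sup>2)" for t
definition "Ef t = exp (bi * (t - s0) / eps)" for t
definition "P t = q t * Ef t + P_shift" for t

lemma P_has_derivative: "0 < t \<Longrightarrow> t < 1 \<Longrightarrow> (P has_real_derivative G t * Ef t / eps) (at t)"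
proof -
  assume t: "0 < t" "t < 1"
  have dQ: "(q has_real_derivative q1 t) (at t)"
  proof -
    have bne: "bi \<noteq> 0" using bi_pos by simp
    show ?thesis
      unfolding q_def[abs_def] q1_def using bne
      by (auto intro!: derivative_eq_intros v_deriv[OF t] simp: field_simps power2_eq_square)
  qed
  have dE: "(Ef has_real_derivative Ef t * (bi / eps)) (at t)"
    unfolding Ef_def using eps_pos by (auto intro!: derivative_eq_intros simp: field_simps)
  have d: "(P has_real_derivative q1 t * Ef t + q t * (Ef t * (bi / eps))) (at t)"
    unfolding P_def by (auto intro!: derivative_eq_intros dQ dE)
  have key: "eps * q1 t + bi * q t = G t"
  proof -
    define u where "u = t - s0"
    have bne: "bi \<noteq> 0" using bi_pos by simp
    have "eps * q1 t + bi * q t = eps * v1 t + bi * v t - bi * a_const - m0 * u - m1 * u\<^sup>2 / 2"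
      unfolding q1_def q_def u_def[symmetric] using bne
      by (simp add: field_simps power2_eq_square power3_eq_cube)
    also have "\<dots> = G t" unfolding G_def a_const_def u_def using bne by (simp add: field_simps)
    finally show ?thesis .
  qed
  have e: "q1 t * Ef t + q t * (Ef t * (bi / eps)) = Ef t * (eps * q1 t + bi * q t) / eps"
    using eps_pos by (simp add: field_simps)
  show ?thesis using d unfolding e key by (simp add: mult.commute)
qed

lemma P_s0: "P s0 = 0"
proof -
  have bne: "bi \<noteq> 0" using bi_pos by simp
  have "Ef s0 = 1" unfolding Ef_def by simp
  then show ?thesis unfolding P_def q_def P_shift_def a_exp_def using bne by (simp add: field_simps power2_eq_square power3_eq_cube)
qed

lemma continuous_on_P: "continuous_on {s0 - h..s0 + h} P"
proof -
  have cv: "continuous_on {s0 - h..s0 + h} v" by (rule continuous_on_subset[OF v_cont]) (use s0h in auto)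
  have ce: "continuous_on {s0 - h..s0 + h} Ef" unfolding Ef_def[abs_def] using eps_pos by (intro continuous_intros) auto
  have cq: "continuous_on {s0 - h..s0 + h} q" unfolding q_def[abs_def] using bi_pos by (intro continuous_intros cv) auto
  show ?thesis unfolding P_def[abs_def] by (intro continuous_intros cq ce)
qed

definition "X = exp (bi * h / eps)"
definition "XM = exp (B0 * kmax)"

lemma X_gt1: "X > 1" unfolding X_def using bi_pos h eps_pos by (simp add: one_less_exp_iff)

lemma X_le: "X \<le> XM"
proof -
  have "bi * h / eps \<le> B0 * kmax"
  proof -
    have "bi * h / eps = bi * (h / eps)" by simp
    also have "\<dots> \<le> B0 * kmax" using bi_le kb bi_pos h eps_pos by (intro mult_mono) auto
    finally show ?thesis .
  qed
  then show ?thesis unfolding X_def XM_def by simp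
qed

definition "Pb = KM kmax * Wh / eps\<^sup>2 * h * h * h * X / eps * h"

lemma abs_P_le:
  assumes t: "s0 - h \<le> t" "t \<le> s0 + h"
  shows "\<bar>P t\<bar> \<le> Pb"
proof -
  have "\<bar>P t - P s0\<bar> \<le> KM kmax * Wh / eps\<^sup>2 * h * h * h * X / eps * \<bar>t - s0\<bar>"
  proof (rule abs_diff_le_of_deriv_bound[OF continuous_on_P, where f'="\<lambda>y. G y * Ef y / eps"])
    fix y assume y: "s0 - h < y" "y < s0 + h"
    show "(P has_real_derivative G y * Ef y / eps) (at y)" using P_has_derivative in_unit_near_s0[OF y] by auto
    have E: "0 \<le> Ef y" "Ef y \<le> X"
    proof -
      show "0 \<le> Ef y" unfolding Ef_def by simp
      have "bi * (y - s0) \<le> bi * h" using y bi_pos by (intro mult_left_mono) auto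
      then have "bi * (y - s0) / eps \<le> bi * h / eps" using eps_pos by (intro divide_right_mono) auto
      then show "Ef y \<le> X" unfolding Ef_def X_def by simp
    qed
    have "\<bar>G y * Ef y / eps\<bar> = \<bar>G y\<bar> * Ef y / eps" using E eps_pos by (simp add: abs_mult)
    also have "\<dots> \<le> KM kmax * Wh / eps\<^sup>2 * h * h * h * X / eps"
      using abs_G_le[OF y] E eps_pos by (intro divide_right_mono mult_mono) auto
    finally show "\<bar>G y * Ef y / eps\<bar> \<le> KM kmax * Wh / eps\<^sup>2 * h * h * h * X / eps" .
  qed (use t h in auto)
  also have "\<dots> \<le> Pb" unfolding Pb_def using t KM_nonneg Wh_nonneg eps_pos h X_gt1
    by (intro mult_left_mono) auto
  finally show ?thesis using P_s0 by simp
qed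

lemma Ef_right: "Ef (s0 + h) = X" unfolding Ef_def X_def by simp
lemma Ef_left: "Ef (s0 - h) = 1 / X"
  unfolding Ef_def X_def by (simp add: exp_minus field_simps)

lemma v_right_repr: "v (s0 + h) = (((P (s0 + h) / X + a_const * 1) + a_exp * (1 / X)) + m0 * (h / bi - eps / bi\<^sup>2 + eps / bi\<^sup>2 * (1 / X)))
     + m1 * (h\<^sup>2 / (2 * bi) - eps * h / bi\<^sup>2 + eps\<^sup>2 / bi ^ 3 * (1 - 1 / X))"
proof -
  have bne: "bi \<noteq> 0" using bi_pos by simp
  have X0: "X \<noteq> 0" using X_gt1 by simp
  show ?thesis unfolding P_def Ef_right q_def P_shift_def using bne X0
    by (simp add: field_simps power2_eq_square power3_eq_cube)
qed

lemma v_left_repr: "v (s0 - h) = (((P (s0 - h) * X + a_const * 1) + a_exp * X) + m0 * (- h / bi - eps / bi\<^sup>2 + eps / bi\<^sup>2 * X))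
     + m1 * (h\<^sup>2 / (2 * bi) + eps * h / bi\<^sup>2 + eps\<^sup>2 / bi ^ 3 * (1 - X))"
proof -
  have bne: "bi \<noteq> 0" using bi_pos by simp
  have X0: "X \<noteq> 0" using X_gt1 by simp
  show ?thesis unfolding P_def Ef_left q_def P_shift_def using bne X0
    by (simp add: field_simps power2_eq_square power3_eq_cube)
qed

lemma v_mid_repr: "v s0 = (((0 + a_const * 1) + a_exp * 1) + m0 * 0) + m1 * 0"
  unfolding a_exp_def by simp

definition "epsS = eps * sigma (bi * h / (2 * eps))"

lemma epsS_eq: "epsS = bi * h / (X - 1)"
  unfolding epsS_def X_def by (rule eps_mult_sigma[OF eps_pos bi_pos h])

lemma epsS_le: "epsS \<le> eps" and epsS_pos: "epsS > 0"
proof -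
  have "sigma (bi * h / (2 * eps)) \<le> 1" "sigma (bi * h / (2 * eps)) > 0"
    using bi_pos h eps_pos by (auto intro!: sigma_le_1 sigma_pos)
  then show "epsS \<le> eps" "epsS > 0" unfolding epsS_def using eps_pos by auto
qed

definition "L2 = epsS / bi - eps / bi + h / 2"

lemma frozen_LN_eq:
  "- epsS * (((v (s0 + h) - v s0) / h - (v s0 - v (s0 - h)) / h) / ((h + h) / 2)) - bi * ((v (s0 + h) - v s0) / h) + c s0 * v s0
   = - stencil epsS bi h (P (s0 + h) / X) 0 (P (s0 - h) * X) - m1 * L2"
proof -
  note A = eps_pos h bi_pos X_gt1 epsS_eq
  have "epsS * (((v (s0 + h) - v s0) / h - (v s0 - v (s0 - h)) / h) / ((h + h) / 2)) + bi * ((v (s0 + h) - v s0) / h)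
      = stencil epsS bi h (v (s0 + h)) (v s0) (v (s0 - h))" by (rule stencil_eq[OF h])
  also have "\<dots> = stencil epsS bi h (P (s0 + h) / X) 0 (P (s0 - h) * X) + a_const * stencil epsS bi h 1 1 1
      + a_exp * stencil epsS bi h (1 / X) 1 X
      + m0 * stencil epsS bi h (h / bi - eps / bi\<^sup>2 + eps / bi\<^sup>2 * (1 / X)) 0 (- h / bi - eps / bi\<^sup>2 + eps / bi\<^sup>2 * X)
      + m1 * stencil epsS bi h (h\<^sup>2 / (2 * bi) - eps * h / bi\<^sup>2 + eps\<^sup>2 / bi ^ 3 * (1 - 1 / X)) 0
           (h\<^sup>2 / (2 * bi) + eps * h / bi\<^sup>2 + eps\<^sup>2 / bi ^ 3 * (1 - X))"
    unfolding v_right_repr v_left_repr v_mid_repr stencil_affine by simp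
  also have "\<dots> = stencil epsS bi h (P (s0 + h) / X) 0 (P (s0 - h) * X) + m0 + m1 * L2"
    unfolding stencil_const stencil_exp_exact[OF A] stencil_z1[OF A] stencil_z2[OF A] L2_def by simp
  finally have F: "epsS * (((v (s0 + h) - v s0) / h - (v s0 - v (s0 - h)) / h) / ((h + h) / 2)) + bi * ((v (s0 + h) - v s0) / h)
      = stencil epsS bi h (P (s0 + h) / X) 0 (P (s0 - h) * X) + m0 + m1 * L2" .
  have "- epsS * (((v (s0 + h) - v s0) / h - (v s0 - v (s0 - h)) / h) / ((h + h) / 2)) - bi * ((v (s0 + h) - v s0) / h) + c s0 * v s0
     = - (epsS * (((v (s0 + h) - v s0) / h - (v s0 - v (s0 - h)) / h) / ((h + h) / 2)) + bi * ((v (s0 + h) - v s0) / h)) + c s0 * v s0"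
    by (simp only: minus_mult_left[symmetric] minus_add_distrib diff_conv_add_uminus)
  also have "\<dots> = - stencil epsS bi h (P (s0 + h) / X) 0 (P (s0 - h) * X) - m1 * L2"
    unfolding F m0_eq by simp
  finally show ?thesis .
qed

lemma abs_P_scaled_le: "\<bar>P (s0 + h) / X\<bar> \<le> X * Pb" "\<bar>P (s0 - h) * X\<bar> \<le> X * Pb"
proof -
  have X1: "X > 1" by (rule X_gt1)
  have "Pb \<ge> 0" using abs_P_le[of s0] h by simp
  have "\<bar>P (s0 + h) / X\<bar> \<le> \<bar>P (s0 + h)\<bar>" using X1 by (simp add: divide_le_eq mult_le_cancel_left1)
  also have "\<dots> \<le> Pb" using abs_P_le[of "s0 + h"] h by simp
  also have "\<dots> \<le> X * Pb" using X1 \<open>Pb \<ge> 0\<close> by (simp add: mult_le_cancel_right1)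
  finally show "\<bar>P (s0 + h) / X\<bar> \<le> X * Pb" .
  have "\<bar>P (s0 - h) * X\<bar> = X * \<bar>P (s0 - h)\<bar>" using X1 by (simp add: abs_mult)
  also have "\<dots> \<le> X * Pb" using abs_P_le[of "s0 - h"] h X1 by (intro mult_left_mono) auto
  finally show "\<bar>P (s0 - h) * X\<bar> \<le> X * Pb" .
qed

lemma abs_stencil_remainder_le:
  "\<bar>stencil epsS bi h (P (s0 + h) / X) 0 (P (s0 - h) * X)\<bar>
   \<le> (exp (B0 * kmax))\<^sup>2 * KM kmax * (2 + B0 * kmax) * ((h / eps)\<^sup>2 * Wh)"
proof -
  define k where "k = h / eps"
  have k: "k > 0" "k \<le> kmax" unfolding k_def using h eps_pos kb by auto
  have X1: "X > 1" by (rule X_gt1)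
  have Pb_eq: "Pb = KM kmax * Wh * X * eps * k ^ 4"
    unfolding Pb_def k_def using eps_pos by (simp add: field_simps power2_eq_square power3_eq_cube power4_eq_xxxx)
  define Yp where "Yp = P (s0 + h) / X"
  define Ym where "Ym = P (s0 - h) * X"
  have Yp: "\<bar>Yp\<bar> \<le> X * Pb" and Ym: "\<bar>Ym\<bar> \<le> X * Pb" unfolding Yp_def Ym_def by (rule abs_P_scaled_le)+
  have "\<bar>stencil epsS bi h Yp 0 Ym\<bar> \<le> epsS * (\<bar>Yp\<bar> + \<bar>Ym\<bar>) / h\<^sup>2 + bi * \<bar>Yp\<bar> / h"
    by (rule abs_stencil_zero_mid_le[OF epsS_pos bi_pos h])
  also have "\<dots> \<le> eps * (2 * (X * Pb)) / h\<^sup>2 + B0 * (X * Pb) / h"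
  proof -
    have "epsS * (\<bar>Yp\<bar> + \<bar>Ym\<bar>) \<le> eps * (2 * (X * Pb))"
      using epsS_le epsS_pos Yp Ym by (intro mult_mono) auto
    moreover have "bi * \<bar>Yp\<bar> \<le> B0 * (X * Pb)" using bi_le bi_pos Yp by (intro mult_mono) auto
    ultimately show ?thesis using h by (intro add_mono divide_right_mono) auto
  qed
  also have "\<dots> = X\<^sup>2 * KM kmax * Wh * (2 * k\<^sup>2 + B0 * k ^ 3)"
    unfolding Pb_eq k_def using eps_pos h by (simp add: field_simps power2_eq_square power3_eq_cube power4_eq_xxxx)
  also have "\<dots> \<le> (exp (B0 * kmax))\<^sup>2 * KM kmax * Wh * ((2 + B0 * kmax) * k\<^sup>2)"
  proof -
    have "B0 * k ^ 3 \<le> B0 * kmax * k\<^sup>2" using k bounds_nonneg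
      by (simp add: power2_eq_square power3_eq_cube mult_left_mono mult_right_mono mult.assoc)
    then have "2 * k\<^sup>2 + B0 * k ^ 3 \<le> (2 + B0 * kmax) * k\<^sup>2" by (simp add: algebra_simps)
    moreover have "X\<^sup>2 \<le> (exp (B0 * kmax))\<^sup>2" using X_le X1 unfolding XM_def by (intro power_mono) auto
    moreover have "0 \<le> KM kmax * Wh" using KM_nonneg Wh_nonneg by simp
    moreover have "0 \<le> 2 * k\<^sup>2 + B0 * k ^ 3" using k bounds_nonneg by simp
    ultimately have "X\<^sup>2 * (KM kmax * Wh) * (2 * k\<^sup>2 + B0 * k ^ 3)
        \<le> (exp (B0 * kmax))\<^sup>2 * (KM kmax * Wh) * ((2 + B0 * kmax) * k\<^sup>2)"
      using KM_nonneg Wh_nonneg by (intro mult_mono) auto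
    then show ?thesis by (simp add: mult.assoc)
  qed
  finally show ?thesis unfolding Yp_def Ym_def k_def by (simp add: algebra_simps)
qed

lemma abs_m1_L2_le: "\<bar>m1 * L2\<bar> \<le> Km1 * B0\<^sup>2 * exp (B0 * kmax) / (2 * beta) * ((h / eps)\<^sup>2 * Wh)"
proof -
  define k where "k = h / eps"
  have k: "k > 0" "k \<le> kmax" unfolding k_def using h eps_pos kb by auto
  have XXM: "X \<le> XM" by (rule X_le)
  define \<rho> where "\<rho> = bi * h / (2 * eps)"
  have rp: "\<rho> > 0" unfolding \<rho>_def using bi_pos h eps_pos by simp
  have L2e: "L2 = (eps / bi) * (sigma \<rho> + \<rho> - 1)"
    unfolding L2_def epsS_def \<rho>_def using bi_pos eps_pos by (simp add: field_simps)
  have sa: "\<bar>sigma \<rho> + \<rho> - 1\<bar> \<le> 2 * \<rho>\<^sup>2 * exp (2 * \<rho>)" by (rule abs_sigma_add_sub_1_le[OF rp])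
  have e2: "exp (2 * \<rho>) \<le> XM" using XXM unfolding X_def \<rho>_def by simp
  have r2: "\<rho>\<^sup>2 \<le> B0\<^sup>2 * k\<^sup>2 / 4"
  proof -
    have "\<rho> = bi * k / 2" unfolding \<rho>_def k_def by simp
    then have "\<rho> \<le> B0 * k / 2" using bi_le k by (simp add: mult_right_mono)
    then have "\<rho>\<^sup>2 \<le> (B0 * k / 2)\<^sup>2" using rp by (intro power_mono) auto
    then show ?thesis by (simp add: power2_eq_square mult_ac)
  qed
  have "\<bar>L2\<bar> \<le> (eps / beta) * (2 * (B0\<^sup>2 * k\<^sup>2 / 4) * XM)"
  proof -
    have "\<bar>L2\<bar> = (eps / bi) * \<bar>sigma \<rho> + \<rho> - 1\<bar>" unfolding L2e using eps_pos bi_pos by (simp add: abs_mult)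
    also have "\<dots> \<le> (eps / beta) * (2 * (B0\<^sup>2 * k\<^sup>2 / 4) * XM)"
    proof (rule mult_mono)
      show "eps / bi \<le> eps / beta" using bi_gt_beta beta_pos eps_pos by (intro divide_left_mono) auto
      have "2 * \<rho>\<^sup>2 * exp (2 * \<rho>) \<le> 2 * (B0\<^sup>2 * k\<^sup>2 / 4) * XM"
        using r2 e2 by (intro mult_mono) auto
      then show "\<bar>sigma \<rho> + \<rho> - 1\<bar> \<le> 2 * (B0\<^sup>2 * k\<^sup>2 / 4) * XM" using sa by linarith
    qed (use eps_pos beta_pos in auto)
    finally show ?thesis .
  qed
  then have "\<bar>m1 * L2\<bar> \<le> (Km1 * Wh / eps) * ((eps / beta) * (2 * (B0\<^sup>2 * k\<^sup>2 / 4) * XM))"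
    by (intro abs_mult_le abs_m1_le)
  also have "\<dots> = Km1 * B0\<^sup>2 * XM / (2 * beta) * (k\<^sup>2 * Wh)"
    using eps_pos beta_pos by (simp add: field_simps)
  finally show ?thesis unfolding XM_def k_def .
qed

lemma frozen_LN_bound:
  "\<bar>- epsS * (((v (s0 + h) - v s0) / h - (v s0 - v (s0 - h)) / h) / ((h + h) / 2)) - bi * ((v (s0 + h) - v s0) / h) + c s0 * v s0\<bar>
   \<le> trunc_const kmax * (h / eps)\<^sup>2 * Wh"
proof -
  have "\<bar>- epsS * (((v (s0 + h) - v s0) / h - (v s0 - v (s0 - h)) / h) / ((h + h) / 2)) - bi * ((v (s0 + h) - v s0) / h) + c s0 * v s0\<bar>
      \<le> \<bar>stencil epsS bi h (P (s0 + h) / X) 0 (P (s0 - h) * X)\<bar> + \<bar>m1 * L2\<bar>"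
    unfolding frozen_LN_eq by (metis abs_minus_cancel abs_triangle_ineq minus_diff_eq uminus_add_conv_diff)
  then show ?thesis using abs_stencil_remainder_le abs_m1_L2_le unfolding trunc_const_def by (simp add: algebra_simps)
qed

end

end

section \<open>Error on the mesh\<close>

locale shishkin_layer = shishkin a eps beta Q N J + layer_function b c b1 b2 c1 c2 beta p eps B0 B1 B2 C0 C1 C2 v v1 v2
  for a eps beta Q N J b c b1 b2 c1 c2 p B0 B1 B2 C0 C1 C2 v v1 v2 +
  fixes V :: "nat \<Rightarrow> real"
  assumes V_0: "V 0 = p" and V_N: "V N = 0"
    and V_eq: "\<And>i. 1 \<le> i \<Longrightarrow> i \<le> N - 1 \<Longrightarrow> LN eps b c x V i = 0"
begin

lemma bc_at_node: "0 < i \<Longrightarrow> i < N \<Longrightarrow> b (x i) \<ge> beta \<and> c (x i) \<ge> 0"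
  using x_interior[of i] b_gt c_nonneg by (auto intro: less_imp_le)

lemma abs_V_le:
  assumes i: "i \<le> N"
  shows "\<bar>V i\<bar> \<le> \<bar>p\<bar> * exp (- beta * x i / eps)"
proof -
  have "0 \<le> \<bar>p\<bar> * exp (- beta * x i / eps) + (s * V i + 0)" if s: "s = 1 \<or> s = -1" for s
  proof (rule LN_minimum_principle[OF N_pos _ _ eps_pos])
    show "0 \<le> \<bar>p\<bar> * exp (- beta * x 0 / eps) + (s * V 0 + 0)" using V_0 s x_0 by (auto simp: abs_if)
    show "0 \<le> \<bar>p\<bar> * exp (- beta * x N / eps) + (s * V N + 0)" using V_N by simp
    show "step x j > 0" if "0 < j" "j \<le> N" for j using step_pos that by simp
    show "b (x j) > 0 \<and> c (x j) \<ge> 0" if "0 < j" "j < N" for j using bc_at_node[OF that] beta_pos by simp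
    show "LN eps b c x (\<lambda>j. \<bar>p\<bar> * exp (- beta * x j / eps) + (s * V j + 0)) j \<ge> 0" if j: "0 < j" "j < N" for j
    proof -
      have "LN eps b c x (\<lambda>j. exp (- beta * x j / eps)) j \<ge> 0"
        using LN_exp_barrier_nonneg[OF eps_pos beta_pos] bc_at_node[OF j] step_pos[of j] step_le_step_Suc[of j] j
        by simp
      then show ?thesis unfolding LN_affine LN_const using V_eq[of j] j by simp
    qed
  qed (use i in simp)
  from this[of 1] this[of "-1"] show ?thesis by auto
qed

definition "e i = v (x i) - V i" for i

lemma abs_e_coarse_le: assumes i: "J \<le> i" "i \<le> N" shows "\<bar>e i\<bar> \<le> 2 * \<bar>p\<bar> * real N powr (- a)"
proof -
  have xi_le: "xi \<le> x i" using x_mono[OF i(1)] x_fine[of J] xi_eq by simp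
  have ew: "exp (- beta * x i / eps) \<le> real N powr (- a)"
  proof -
    have "- beta * x i / eps \<le> - beta * xi / eps" using xi_le beta_pos eps_pos by (simp add: divide_right_mono)
    then show ?thesis using exp_neg_xi by (metis exp_le_cancel_iff)
  qed
  have "\<bar>e i\<bar> \<le> \<bar>v (x i)\<bar> + \<bar>V i\<bar>" unfolding e_def by simp
  also have "\<dots> \<le> \<bar>p\<bar> * exp (- beta * x i / eps) + \<bar>p\<bar> * exp (- beta * x i / eps)"
    using abs_v_le_W[of "x i"] x_in_unit[OF i(2)] abs_V_le[OF i(2)] unfolding W_def by (intro add_mono) auto
  also have "\<dots> \<le> 2 * \<bar>p\<bar> * real N powr (- a)" using ew by (simp add: mult_left_mono)
  finally show ?thesis .
qed

definition "kmax = a / (beta * Q)"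

lemma abs_LN_v_fine_le:
  assumes i: "1 \<le> i" "i < J"
  shows "\<bar>LN eps b c x (\<lambda>j. v (x j)) i\<bar> \<le> trunc_const kmax * k\<^sup>2 * W (x i - h)"
proof -
  have s1: "step x i = h" "step x (i+1) = h" using step_fine i by auto
  have xp: "x (i+1) = x i + h" and xm: "x (i-1) = x i - h" using s1 unfolding step_def by simp_all
  have c1: "0 \<le> x i - h" using x_fine[of i] i h_pos by (simp add: algebra_simps)
  have c2: "x i + h < 1"
  proof -
    have "x i + h = x (i+1)" using xp by simp
    also have "\<dots> \<le> xi"
    proof -
      have "real (i+1) \<le> real J" using i by simp
      then have "real (i+1) * h \<le> real J * h" using h_pos by (intro mult_right_mono) auto
      then show ?thesis using x_fine[of "i+1"] i xi_eq by simp
    qed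
    also have "\<dots> < 1" using xi_le_Q Q_lt1 by simp
    finally show ?thesis .
  qed
  have c3: "h / eps \<le> kmax" using k_le unfolding k_def kmax_def .
  note tb = frozen_LN_bound[OF c1 c2 h_pos c3]
  show ?thesis using tb[unfolded epsS_def[OF c1 c2 h_pos c3] Wh_def[OF c1 c2 h_pos c3]] unfolding LN_eq s1 xp xm k_def by (simp add: algebra_simps)
qed

lemma trunc_const_nonneg: "trunc_const kmax \<ge> 0"
proof -
  have km: "kmax \<ge> 0" unfolding kmax_def using a_pos beta_pos Q_pos by simp
  have "KM kmax \<ge> 0" unfolding KM_def using bounds_nonneg K1_nonneg K2_nonneg K3_nonneg km by simp
  moreover have "Km1 \<ge> 0" unfolding Km1_def using bounds_nonneg K1_nonneg by simp
  ultimately show ?thesis unfolding trunc_const_def using km bounds_nonneg beta_pos by simp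
qed

definition "r = 1 + (beta / 2) * k"
definition "fine_const = trunc_const kmax * \<bar>p\<bar> * exp (beta * kmax)"
definition "fine_bound = 4 * fine_const / beta\<^sup>2 * (eps * k\<^sup>2)"

lemma fine_const_nonneg: "fine_const \<ge> 0" unfolding fine_const_def using trunc_const_nonneg by simp

lemma fine_bound_nonneg: "fine_bound \<ge> 0"
  unfolding fine_bound_def using fine_const_nonneg eps_pos beta_pos by simp

lemma r_gt_1: "r > 1" unfolding r_def using beta_pos k_pos by simp

lemma exp_le_inverse_r_power: "exp (- (beta / 2) * k * real n) \<le> inverse r ^ n"
proof -
  have "r \<le> exp ((beta / 2) * k)" unfolding r_def using exp_ge_add_one_self[of "(beta/2) * k"] by linarith
  then have "exp (- (beta / 2) * k) \<le> inverse r" using r_gt_1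
    by (simp add: exp_minus le_imp_inverse_le)
  then have "exp (- (beta / 2) * k) ^ n \<le> inverse r ^ n" by (intro power_mono) auto
  then show ?thesis by (simp add: exp_of_nat_mult[symmetric] mult_ac)
qed

lemma abs_LN_v_fine_le_geometric:
  assumes i: "1 \<le> i" "i < J"
  shows "\<bar>LN eps b c x (\<lambda>j. v (x j)) i\<bar> \<le> fine_const * k\<^sup>2 * inverse r ^ (i+1)"
proof -
  have xi: "x i - h = (real i - 1) * h" using x_fine[of i] i by (simp add: algebra_simps)
  have Wx: "W (x i - h) \<le> \<bar>p\<bar> * exp (beta * kmax) * inverse r ^ (i+1)"
  proof -
    have e1: "- beta * (x i - h) / eps = - beta * k * (real i - 1)"
      unfolding xi k_def using eps_pos by (simp add: field_simps)
    have "- beta * k * (real i - 1) \<le> - (beta / 2) * k * real (i+1) + beta * kmax"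
    proof -
      have "- beta * k * (real i - 1) = - (beta / 2) * k * real (i+1) + beta * k - (beta/2) * k * (real i - 1)"
        by (simp add: field_simps)
      also have "\<dots> \<le> - (beta / 2) * k * real (i+1) + beta * kmax"
      proof -
        have "beta * k \<le> beta * kmax" using k_le beta_pos unfolding kmax_def by (intro mult_left_mono) auto
        moreover have "0 \<le> (beta/2) * k * (real i - 1)" using i beta_pos k_pos by simp
        ultimately show ?thesis by linarith
      qed
      finally show ?thesis .
    qed
    then have "exp (- beta * (x i - h) / eps) \<le> exp (- (beta / 2) * k * real (i+1)) * exp (beta * kmax)"
      unfolding e1 by (simp add: exp_add[symmetric])
    also have "\<dots> \<le> inverse r ^ (i+1) * exp (beta * kmax)"
      using exp_le_inverse_r_power[of "i+1"] by (intro mult_right_mono) auto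
    finally show ?thesis unfolding W_def by (simp add: mult_left_mono mult_ac)
  qed
  have "\<bar>LN eps b c x (\<lambda>j. v (x j)) i\<bar> \<le> trunc_const kmax * k\<^sup>2 * W (x i - h)" by (rule abs_LN_v_fine_le[OF i])
  also have "\<dots> \<le> trunc_const kmax * k\<^sup>2 * (\<bar>p\<bar> * exp (beta * kmax) * inverse r ^ (i+1))"
    using Wx trunc_const_nonneg by (intro mult_left_mono) auto
  also have "\<dots> = fine_const * k\<^sup>2 * inverse r ^ (i+1)" unfolding fine_const_def by (simp add: mult_ac)
  finally show ?thesis .
qed

lemma LN_fine_comparison_nonneg:
  assumes s: "s = 1 \<or> s = -1" and "B \<ge> 0" and j: "0 < j" "j < J"
  shows "LN eps b c x (\<lambda>j. fine_bound * inverse r ^ j + (s * e j + B)) j \<ge> 0"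
proof -
  have jN: "j < N" using j J_lt by simp
  have bc: "b (x j) \<ge> beta" "c (x j) \<ge> 0" using bc_at_node[of j] j jN by auto
  have "LN eps b c x (\<lambda>j. inverse r ^ j) j \<ge> beta\<^sup>2 / (4 * eps) * inverse r ^ (j+1)"
    by (rule LN_geometric_barrier_ge[where b=b and c=c and x=x and i=j, OF eps_pos beta_pos bc h_pos])
       (use step_fine j in \<open>auto simp: r_def k_def\<close>)
  then have "fine_bound * LN eps b c x (\<lambda>j. inverse r ^ j) j \<ge> fine_bound * (beta\<^sup>2 / (4 * eps) * inverse r ^ (j+1))"
    using fine_bound_nonneg by (intro mult_left_mono) auto
  moreover have "fine_bound * (beta\<^sup>2 / (4 * eps) * inverse r ^ (j+1)) = fine_const * k\<^sup>2 * inverse r ^ (j+1)"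
    unfolding fine_bound_def using eps_pos beta_pos by (simp add: field_simps power2_eq_square)
  moreover have "LN eps b c x e j = LN eps b c x (\<lambda>j. v (x j)) j"
    unfolding e_def[abs_def] LN_diff using V_eq[of j] j jN by simp
  then have "s * LN eps b c x e j \<ge> - (fine_const * k\<^sup>2 * inverse r ^ (j+1))"
    using abs_LN_v_fine_le_geometric[of j] j s by auto
  moreover have "c (x j) * B \<ge> 0" using bc \<open>B \<ge> 0\<close> by simp
  ultimately show ?thesis unfolding LN_affine LN_const by linarith
qed

lemma abs_e_fine_le:
  assumes i: "i \<le> J"
  shows "\<bar>e i\<bar> \<le> fine_bound + 2 * \<bar>p\<bar> * real N powr (- a)"
proof -
  define B where "B = 2 * \<bar>p\<bar> * real N powr (- a)"
  have "B \<ge> 0" unfolding B_def by simp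
  note fine_bound = fine_bound_nonneg
  have "e 0 = 0" unfolding e_def using x_0 v_0 V_0 by simp
  have e_J: "\<bar>e J\<bar> \<le> B" unfolding B_def using abs_e_coarse_le[of J] J_lt by simp
  have "0 \<le> fine_bound * inverse r ^ i + (s * e i + B)" if s: "s = 1 \<or> s = -1" for s
  proof (rule LN_minimum_principle[OF J_pos _ _ eps_pos])
    show "0 \<le> fine_bound * inverse r ^ 0 + (s * e 0 + B)" using \<open>e 0 = 0\<close> fine_bound \<open>B \<ge> 0\<close> by simp
    have "fine_bound * inverse r ^ J \<ge> 0" using fine_bound r_gt_1 by simp
    then show "0 \<le> fine_bound * inverse r ^ J + (s * e J + B)" using e_J s by (auto simp: abs_if split: if_splits)
    show "step x j > 0" if "0 < j" "j \<le> J" for j using step_pos that by simp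
    show "b (x j) > 0 \<and> c (x j) \<ge> 0" if "0 < j" "j < J" for j using bc_at_node[of j] that J_lt beta_pos by simp
    show "LN eps b c x (\<lambda>j. fine_bound * inverse r ^ j + (s * e j + B)) j \<ge> 0" if "0 < j" "j < J" for j
      by (rule LN_fine_comparison_nonneg[OF s \<open>B \<ge> 0\<close> that])
  qed (use i in simp)
  from this[of 1] this[of "-1"] have "\<bar>e i\<bar> \<le> fine_bound * inverse r ^ i + B" by auto
  moreover have "fine_bound * inverse r ^ i \<le> fine_bound"
    using fine_bound r_gt_1 by (intro mult_left_le power_le_one) (auto simp: inverse_le_1_iff)
  ultimately show ?thesis unfolding B_def by simp
qed

definition "error_const = 2 * \<bar>p\<bar> + 4 * fine_const / beta\<^sup>2 * kmax\<^sup>2"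

lemma abs_e_le:
  assumes i: "i \<le> N"
  shows "\<bar>e i\<bar> \<le> fine_bound + 2 * \<bar>p\<bar> * real N powr (- a)"
proof (cases "i \<le> J")
  case True then show ?thesis by (rule abs_e_fine_le)
next
  case False
  then show ?thesis using abs_e_coarse_le[of i] i fine_bound_nonneg by simp
qed

lemma abs_error_le:
  assumes i: "i \<le> N"
  shows "\<bar>v (x i) - V i\<bar> \<le> error_const * max (eps * real N powr (-2) * (ln (real N))\<^sup>2) (real N powr (- a))"
proof -
  define M where "M = max (eps * real N powr (-2) * (ln (real N))\<^sup>2) (real N powr (- a))"
  have "fine_bound = 4 * fine_const / beta\<^sup>2 * kmax\<^sup>2 * (eps * real N powr (-2) * (ln (real N))\<^sup>2)"
    unfolding fine_bound_def eps_k_squared kmax_def by simp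
  also have "\<dots> \<le> 4 * fine_const / beta\<^sup>2 * kmax\<^sup>2 * M"
    unfolding M_def using fine_const_nonneg beta_pos by (intro mult_left_mono) auto
  finally have "fine_bound \<le> 4 * fine_const / beta\<^sup>2 * kmax\<^sup>2 * M" .
  moreover have "2 * \<bar>p\<bar> * real N powr (- a) \<le> 2 * \<bar>p\<bar> * M" unfolding M_def by (simp add: mult_left_mono)
  ultimately have "\<bar>e i\<bar> \<le> error_const * M"
    using abs_e_le[OF i] unfolding error_const_def by (simp add: algebra_simps)
  then show ?thesis unfolding e_def M_def .
qed
end


section \<open>Reduction to the layer function\<close>

definition C2_bounds ::
  "(real \<Rightarrow> real) \<Rightarrow> (real \<Rightarrow> real) \<Rightarrow> (real \<Rightarrow> real) \<Rightarrow> real \<Rightarrow> real \<Rightarrow> real \<Rightarrow> bool" where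
  "C2_bounds g g1 g2 M0 M1 M2 \<longleftrightarrow>
     (\<forall>x\<in>{0<..<1}. (g has_real_derivative g1 x) (at x) \<and> (g1 has_real_derivative g2 x) (at x)) \<and>
     (\<forall>x\<in>{0..1}. \<bar>g x\<bar> \<le> M0 \<and> \<bar>g1 x\<bar> \<le> M1 \<and> \<bar>g2 x\<bar> \<le> M2)"

lemma Ck_on_imp_C2_bounds:
  assumes "Ck_on k {0..1} g" "2 \<le> k"
  obtains g1 g2 M0 M1 M2 where "C2_bounds g g1 g2 M0 M1 M2"
proof -
  obtain D where D0: "\<forall>x\<in>{0..1}. D 0 x = g x"
    and D_deriv: "\<forall>j<k. \<forall>x\<in>{0..1}. (D j has_real_derivative D (Suc j) x) (at x within {0..1})"
    and D_cont: "\<forall>j\<le>k. continuous_on {0..1} (D j)"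
    using assms(1) unfolding Ck_on_def by blast
  have "\<exists>M. \<forall>x\<in>{0..1}. \<bar>D j x\<bar> \<le> M" if "j \<le> k" for j
    using continuous_on_compact_bound[OF compact_Icc D_cont[rule_format, OF that]] by (metis real_norm_def)
  then obtain M0 M1 M2 where "\<forall>x\<in>{0..1}. \<bar>D 0 x\<bar> \<le> M0" "\<forall>x\<in>{0..1}. \<bar>D 1 x\<bar> \<le> M1"
    "\<forall>x\<in>{0..1}. \<bar>D 2 x\<bar> \<le> M2"
    using assms(2) by (metis le_0_eq le_trans one_le_numeral zero_le)
  moreover have "(D j has_real_derivative D (Suc j) x) (at x)" if "j < 2" "x \<in> {0<..<1}" for j x
  proof -
    have "(D j has_real_derivative D (Suc j) x) (at x within {0..1})" using D_deriv that assms(2) by auto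
    then show ?thesis using at_within_Icc_at[of 0 x 1] that by simp
  qed
  moreover have "(g has_real_derivative D 1 x) (at x)" if "x \<in> {0<..<1}" for x
    using calculation(4)[of 0 x] that D0
    by (auto intro: has_field_derivative_transform_within_open[where S="{0<..<1}"])
  ultimately have "C2_bounds g (D 1) (D 2) M0 M1 M2"
    unfolding C2_bounds_def using D0 by (auto simp: numeral_2_eq_2)
  then show ?thesis by (rule that)
qed

lemma reduced_solution_linear_rhs:
  assumes "reduced_solution b c f u0" and lin: "\<forall>x\<in>{0..1}. u0 x = p * x + q"
    and x: "0 < x" "x < 1"
  shows "f x = - b x * p + c x * (p * x - p)"
proof -
  obtain u0' where "u0 1 = 0"
    and u0: "\<forall>x\<in>{0<..<1}. (u0 has_real_derivative u0' x) (at x) \<and> - b x * u0' x + c x * u0 x = f x"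
    using assms(1) unfolding reduced_solution_def by blast
  then have "q = - p" using lin by simp
  have "((\<lambda>t. p * t + q) has_real_derivative p) (at x)" by (auto intro!: derivative_eq_intros)
  then have "(u0 has_real_derivative p) (at x)"
    by (rule has_field_derivative_transform_within_open[where S="{0<..<1}"]) (use x lin in auto)
  moreover have "(u0 has_real_derivative u0' x) (at x)" using u0 x by simp
  ultimately have "p = u0' x" by (rule DERIV_unique)
  then show ?thesis using u0 lin x \<open>q = - p\<close> by auto
qed

lemma layer_function_of_bvp_solution:
  assumes b: "C2_bounds b b1 b2 B0 B1 B2" and c: "C2_bounds c c1 c2 C0 C1 C2"
    and beta: "beta > 0" "\<forall>x\<in>{0..1}. b x > beta" and c_nonneg: "\<forall>x\<in>{0..1}. c x \<ge> 0"
    and eps: "0 < eps" "eps < 1"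
    and f: "\<And>x. 0 < x \<Longrightarrow> x < 1 \<Longrightarrow> f x = - b x * p + c x * (p * x - p)"
    and u: "bvp_solution eps b c f u"
  obtains u' u'' where "layer_function b c b1 b2 c1 c2 beta p eps B0 B1 B2 C0 C1 C2
    (\<lambda>t. u t - (p * t - p)) (\<lambda>t. u' t - p) u''"
proof -
  obtain u' u'' where "continuous_on {0..1} u" "u 0 = 0" "u 1 = 0"
    and u_eq: "\<forall>x\<in>{0<..<1}. (u has_real_derivative u' x) (at x) \<and> (u' has_real_derivative u'' x) (at x) \<and>
        - eps * u'' x - b x * u' x + c x * u x = f x"
    using u unfolding bvp_solution_def by blast
  then have "layer_function b c b1 b2 c1 c2 beta p eps B0 B1 B2 C0 C1 C2
    (\<lambda>t. u t - (p * t - p)) (\<lambda>t. u' t - p) u''"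
    using b c beta c_nonneg eps f unfolding C2_bounds_def
    by unfold_locales (auto intro!: derivative_eq_intros continuous_intros simp: algebra_simps)
  then show ?thesis by (rule that)
qed

context shishkin
begin

lemma LN_sub_linear_eq_zero:
  assumes U_eq: "LN eps b c x U i = f (x i)" and f: "f (x i) = - b (x i) * p + c (x i) * (p * x i - p)"
    and i: "1 \<le> i"
  shows "LN eps b c x (\<lambda>j. U j - (p * x j - p)) i = 0"
proof -
  have "step x i \<noteq> 0" "step x (i+1) \<noteq> 0" using step_pos[of i] step_pos[of "i+1"] i by auto
  then have "LN eps b c x (\<lambda>j. p * x j - p) i = f (x i)"
    using LN_affine_function[of x i eps b c p "- p"] f by simp
  then show ?thesis using LN_diff[of eps b c x U "\<lambda>j. p * x j - p" i] U_eq by simp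
qed

lemma abs_bvp_error_le:
  assumes b: "C2_bounds b b1 b2 B0 B1 B2" and c: "C2_bounds c c1 c2 C0 C1 C2"
    and b_gt: "\<forall>x\<in>{0..1}. b x > beta" and c_nonneg: "\<forall>x\<in>{0..1}. c x \<ge> 0" and "eps < 1"
    and f: "\<And>x. 0 < x \<Longrightarrow> x < 1 \<Longrightarrow> f x = - b x * p + c x * (p * x - p)"
    and u: "bvp_solution eps b c f u"
    and U: "U 0 = 0" "U N = 0" "\<And>i. 1 \<le> i \<Longrightarrow> i \<le> N - 1 \<Longrightarrow> LN eps b c x U i = f (x i)"
    and i: "i \<le> N"
  shows "\<bar>u (x i) - U i\<bar>
    \<le> shishkin_layer.error_const a beta Q p B0 B1 B2 C0 C1 C2
      * max (eps * real N powr (-2) * (ln (real N))\<^sup>2) (real N powr (- a))"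
proof -
  obtain u' u'' where layer: "layer_function b c b1 b2 c1 c2 beta p eps B0 B1 B2 C0 C1 C2
    (\<lambda>t. u t - (p * t - p)) (\<lambda>t. u' t - p) u''"
    using layer_function_of_bvp_solution[OF b c beta_pos b_gt c_nonneg eps_pos \<open>eps < 1\<close> f u] by blast
  define V where "V j = U j - (p * x j - p)" for j
  have V_eq: "LN eps b c x V j = 0" if "1 \<le> j" "j \<le> N - 1" for j
  proof -
    have "f (x j) = - b (x j) * p + c (x j) * (p * x j - p)" using f x_interior[of j] that by auto
    then show ?thesis
      unfolding V_def using LN_sub_linear_eq_zero[where f=f and p=p and i=j] U(3)[OF that] that by simp
  qed
  have V_boundary: "V 0 = p" "V N = 0" unfolding V_def using U x_0 x_N by auto
  interpret layer_function b c b1 b2 c1 c2 beta p eps B0 B1 B2 C0 C1 C2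
    "\<lambda>t. u t - (p * t - p)" "\<lambda>t. u' t - p" u''
    by (rule layer)
  interpret shishkin_layer a eps beta Q N J b c b1 b2 c1 c2 p B0 B1 B2 C0 C1 C2
    "\<lambda>t. u t - (p * t - p)" "\<lambda>t. u' t - p" u'' V
    by unfold_locales (use V_eq V_boundary in auto)
  show ?thesis using abs_error_le[OF i] unfolding V_def by (simp add: algebra_simps)
qed

end

theorem theorem6:
  fixes b c f u0 :: "real \<Rightarrow> real" and beta Q a :: real
  assumes b_C4: "Ck_on 4 {0..1} b" and c_C4: "Ck_on 4 {0..1} c" and f_C4: "Ck_on 4 {0..1} f"
    and beta_pos: "beta > 0" and b_gt: "\<forall>x\<in>{0..1}. b x > beta"
    and c_nonneg: "\<forall>x\<in>{0..1}. c x \<ge> 0"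
    and u0_red: "reduced_solution b c f u0"
    and u0_lin: "\<exists>p q. \<forall>x\<in>{0..1}. u0 x = p * x + q"
    and Q_rat: "Q \<in> \<rat>" and Q_pos: "0 < Q" and Q_lt1: "Q < 1"
    and a_ge: "a \<ge> beta / (b 0 - beta)"
  shows "\<exists>C. \<forall>eps N u U.
     0 < eps \<longrightarrow> eps < 1 \<longrightarrow> 0 < N \<longrightarrow> Q * real N \<in> \<int> \<longrightarrow>
     trans_pt a eps beta (real N) \<le> Q \<longrightarrow>
     bvp_solution eps b c f u \<longrightarrow>
     U 0 = 0 \<longrightarrow> U N = 0 \<longrightarrow>
     (\<forall>i. 1 \<le> i \<and> i \<le> N - 1 \<longrightarrow>
        LN eps b c (shishkin_mesh (real N) a eps beta Q N) U i
          = f (shishkin_mesh (real N) a eps beta Q N i)) \<longrightarrow>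
     (MAX i\<in>{0..N}. \<bar>u (shishkin_mesh (real N) a eps beta Q N i) - U i\<bar>)
       \<le> C * max (eps * real N powr (-2) * (ln (real N))\<^sup>2) (real N powr (- a))"
proof -
  obtain b1 b2 B0 B1 B2 where b: "C2_bounds b b1 b2 B0 B1 B2" by (rule Ck_on_imp_C2_bounds[OF b_C4]) auto
  obtain c1 c2 C0 C1 C2 where c: "C2_bounds c c1 c2 C0 C1 C2" by (rule Ck_on_imp_C2_bounds[OF c_C4]) auto
  obtain p q where "\<forall>x\<in>{0..1}. u0 x = p * x + q" using u0_lin by blast
  note f = reduced_solution_linear_rhs[OF u0_red this]
  have "a > 0" using a_ge beta_pos b_gt by (smt (verit) atLeastAtMost_iff divide_pos_pos)
  show ?thesis
  proof (intro exI[of _ "shishkin_layer.error_const a beta Q p B0 B1 B2 C0 C1 C2"] allI impI)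
    fix eps N u U
    assume eps: "0 < eps" "eps < 1" and N: "0 < N" "Q * real N \<in> \<int>" "trans_pt a eps beta (real N) \<le> Q"
      and u: "bvp_solution eps b c f u" and U: "U 0 = 0" "U N = 0"
      and U_eq: "\<forall>i. 1 \<le> i \<and> i \<le> N - 1 \<longrightarrow>
        LN eps b c (shishkin_mesh (real N) a eps beta Q N) U i = f (shishkin_mesh (real N) a eps beta Q N i)"
    obtain z where z: "Q * real N = of_int z" using N(2) by (auto elim: Ints_cases)
    then have "real (nat z) = Q * real N" using Q_pos by (smt (verit) of_int_less_0_iff of_nat_nat zero_le_mult_iff of_nat_0_le_iff)
    then interpret shishkin a eps beta Q N "nat z"
      by unfold_locales (use eps beta_pos \<open>a > 0\<close> Q_pos Q_lt1 N in auto)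
    show "(MAX i\<in>{0..N}. \<bar>u (shishkin_mesh (real N) a eps beta Q N i) - U i\<bar>)
      \<le> shishkin_layer.error_const a beta Q p B0 B1 B2 C0 C1 C2
        * max (eps * real N powr (-2) * (ln (real N))\<^sup>2) (real N powr (- a))"
      using abs_bvp_error_le[OF b c b_gt c_nonneg eps(2) f u U] U_eq unfolding x_def
      by (intro Max.boundedI) auto
  qed
qed

end
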